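(* Let $\mathcal R=\mathbb Z[a_1,a_2,a_3,a_5,a_6]$ with $a_1,a_2,a_3,a_5,a_6$ independent indeterminates, and let $k_0,k_1,l_0,l_1$ be further independent indeterminates. Define sequences $(k_n),(l_n)$ by $$k_{n+1}k_{n-1}=a_3k_n^2+a_5k_nl_n+a_6l_n^2,\qquad l_{n+1}l_{n-1}=a_1k_n^2+a_2k_nl_n+a_3l_n^2\qquad(n\ge1).$$ Then the system has the Laurent property: every $k_n,l_n$ belongs to $\mathcal R[k_0^{\pm1},k_1^{\pm1},l_0^{\pm1},l_1^{\pm1}]$. Moreover, for every $n\ge0$ the four adjacent iterates $k_n,l_n,k_{n+1},l_{n+1}$ are pairwise coprime in this Laurent polynomial ring. *)

theory Defs
  imports "HOL-Library.Poly_Mapping" "HOL-Computational_Algebra.Fraction_Field"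
begin

text \<open>Laurent polynomials over Z in variables indexed by nat: finitely supported
  maps from integer exponent vectors (nat =>0 int) to int coefficients,
  with convolution product (the group ring of Z^(omega) over Z; an integral domain).\<close>

type_synonym lpoly = "(nat \<Rightarrow>\<^sub>0 int) \<Rightarrow>\<^sub>0 int"

definition var :: "nat \<Rightarrow> lpoly" where
  "var i = Poly_Mapping.single (Poly_Mapping.single i 1) 1"

definition "a1 = var 1"
definition "a2 = var 2"
definition "a3 = var 3"
definition "a5 = var 5"
definition "a6 = var 6"
definition "k0 = var 10"
definition "k1 = var 11"
definition "l0 = var 20"
definition "l1 = var 21"

definition coeff_vars :: "nat set" where "coeff_vars = {1,2,3,5,6}"
definition laurent_vars :: "nat set" where "laurent_vars = {10,11,20,21}"

text \<open>The ring Z[a1,a2,a3,a5,a6][k0^{+-1},k1^{+-1},l0^{+-1},l1^{+-1}] as a subring: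
  only the nine variables occur, the a_i with nonnegative exponents.\<close>
definition LR :: "lpoly set" where
  "LR = {p. \<forall>m \<in> Poly_Mapping.keys p. \<forall>v. (v \<notin> coeff_vars \<union> laurent_vars \<longrightarrow> Poly_Mapping.lookup m v = 0)
                                 \<and> (v \<in> coeff_vars \<longrightarrow> Poly_Mapping.lookup m v \<ge> 0)}"

definition dvd_in :: "'a::comm_ring_1 set \<Rightarrow> 'a \<Rightarrow> 'a \<Rightarrow> bool" where
  "dvd_in S d x \<longleftrightarrow> (\<exists>q \<in> S. x = d * q)"

definition unit_in :: "'a::comm_ring_1 set \<Rightarrow> 'a \<Rightarrow> bool" where
  "unit_in S u \<longleftrightarrow> u \<in> S \<and> (\<exists>v \<in> S. u * v = 1)"

definition coprime_in :: "'a::comm_ring_1 set \<Rightarrow> 'a \<Rightarrow> 'a \<Rightarrow> bool" where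
  "coprime_in S x y \<longleftrightarrow> (\<forall>d \<in> S. dvd_in S d x \<and> dvd_in S d y \<longrightarrow> unit_in S d)"

abbreviation emb :: "lpoly \<Rightarrow> lpoly fract" where "emb p \<equiv> Fract p 1"

text \<open>The iterates in the fraction field: state n = (k_n, l_n, k_(n+1), l_(n+1)).\<close>
fun state :: "nat \<Rightarrow> lpoly fract \<times> lpoly fract \<times> lpoly fract \<times> lpoly fract" where
  "state 0 = (emb k0, emb l0, emb k1, emb l1)"
| "state (Suc n) = (case state n of (k, l, k', l') \<Rightarrow>
      (k', l',
       (emb a3 * k'^2 + emb a5 * k' * l' + emb a6 * l'^2) / k,
       (emb a1 * k'^2 + emb a2 * k' * l' + emb a3 * l'^2) / l))"

definition kseq :: "nat \<Rightarrow> lpoly fract" where "kseq n = fst (state n)"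
definition lseq :: "nat \<Rightarrow> lpoly fract" where "lseq n = fst (snd (state n))"

end

theory Submission
  imports Defs "HOL-Computational_Algebra.Polynomial_Factorial" "HOL-Library.Product_Lexorder"
    "HOL-Library.Product_Plus"
begin

(* LR is the localisation of the factorial ring Z[a][k0,k1,l0,l1] at the monomial k0 k1 l0 l1, so
   Euclid's lemma holds in LR; both claims are proved together by induction.

   Modulo k(n+1) the recurrence gives k(n+2) k(n) = a6 l(n+1)^2 and l(n+2) l(n) = a3 l(n+1)^2. By
   homogeneity of QA(x,y) = a3 x^2 + a5 x y + a6 y^2,
     (k(n) l(n))^2 QA(k(n+2), l(n+2)) = a3 a6 l(n+1)^4 QA(k(n), l(n)) = a3 a6 l(n+1)^4 k(n+1) k(n-1) = 0,
   and as k(n+1) is coprime to k(n) and l(n), it divides QA(k(n+2), l(n+2)) = k(n+3) k(n+1). The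
   system is symmetric under k <-> l, a1 <-> a6, a2 <-> a5, which gives the same for l.

   Coprimality of adjacent iterates propagates: modulo k and l the new terms reduce to a6 l^2, a3 l^2,
   a3 k^2, a1 k^2, and a common divisor of the two new terms divides the resultant Res of the two
   quadratic forms. This needs two invariants of every iterate: it is positive at integer points
   where one of a1, a3, a6 vanishes, so none of these primes divides it; and its leading coefficient
   for a lexicographic order on k0, k1, l0, l1 divides a power of a1 a3 a6, so it is coprime to Res.
   The leading monomials of k(n) and l(n) differ, hence the leading term of each quadratic form is a
   single square, and both invariants propagate. *)

definition is_ring_hom :: "('a::comm_ring_1 \<Rightarrow> 'b::comm_ring_1) \<Rightarrow> bool" where
  "is_ring_hom f \<longleftrightarrow> f 0 = 0 \<and> f 1 = 1 \<and> (\<forall>x y. f (x + y) = f x + f y) \<and> (\<forall>x y. f (x * y) = f x * f y)"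

lemma is_ring_homD:
  assumes "is_ring_hom f"
  shows "f 0 = 0" "f 1 = 1" "f (x + y) = f x + f y" "f (x * y) = f x * f y"
  using assms by (auto simp: is_ring_hom_def)

lemma is_ring_hom_uminus: "is_ring_hom f \<Longrightarrow> f (- x) = - f x"
proof -
  assume f: "is_ring_hom f"
  have "f (- x) + f x = 0" using is_ring_homD(3)[OF f, of "- x" x] is_ring_homD(1)[OF f] by simp
  then show ?thesis by (simp add: eq_neg_iff_add_eq_0)
qed

lemma is_ring_hom_diff: "is_ring_hom f \<Longrightarrow> f (x - y) = f x - f y"
  using is_ring_homD(3)[of f x "- y"] is_ring_hom_uminus[of f y] by simp

lemma is_ring_hom_power: "is_ring_hom f \<Longrightarrow> f (x ^ n) = f x ^ n"
  by (induction n) (simp_all add: is_ring_homD(2,4))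

lemma is_ring_hom_prod: "is_ring_hom f \<Longrightarrow> f (prod g S) = (\<Prod>x\<in>S. f (g x))"
  by (induction S rule: infinite_finite_induct) (simp_all add: is_ring_homD(2,4))

lemmas is_ring_hom_simps = is_ring_homD is_ring_hom_uminus is_ring_hom_diff is_ring_hom_power

definition eval_poly :: "('a::zero \<Rightarrow> 'b::comm_ring_1) \<Rightarrow> 'b \<Rightarrow> 'a poly \<Rightarrow> 'b" where
  "eval_poly f v p = poly (map_poly f p) v"

lemma eval_poly_0 [simp]: "eval_poly f v 0 = 0"
  by (simp add: eval_poly_def)

lemma eval_poly_pCons: "f 0 = 0 \<Longrightarrow> eval_poly f v (pCons a p) = f a + v * eval_poly f v p"
  by (simp add: eval_poly_def map_poly_pCons)

lemma eval_poly_const: "f 0 = 0 \<Longrightarrow> eval_poly f v [:c:] = f c"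
  by (simp add: eval_poly_pCons)

lemma eval_poly_1: "f 0 = 0 \<Longrightarrow> f 1 = 1 \<Longrightarrow> eval_poly f v 1 = 1"
  by (simp add: one_pCons eval_poly_pCons)

lemma is_ring_hom_eval_poly:
  assumes f: "is_ring_hom f"
  shows "is_ring_hom (eval_poly f v)"
proof -
  note simps = eval_poly_pCons is_ring_homD[OF f]
  have add: "eval_poly f v (p + q) = eval_poly f v p + eval_poly f v q" for p q
  proof (induction p arbitrary: q rule: pCons_induct)
    case (pCons a p)
    obtain b q' where "q = pCons b q'" by (cases q) auto
    then show ?case using pCons.IH[of q'] by (simp add: simps algebra_simps)
  qed simp
  have smult: "eval_poly f v (smult a q) = f a * eval_poly f v q" for a q
    by (induction q rule: pCons_induct) (auto simp: simps algebra_simps)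
  have mult: "eval_poly f v (p * q) = eval_poly f v p * eval_poly f v q" for p q
  proof (induction p rule: pCons_induct)
    case (pCons a p)
    then show ?case by (simp add: add smult simps algebra_simps)
  qed simp
  show ?thesis by (simp add: is_ring_hom_def add mult eval_poly_1 simps)
qed

lemma lookup_mult_single_one:
  fixes f :: "('a::ab_group_add \<Rightarrow>\<^sub>0 'b::semiring_1)"
  shows "Poly_Mapping.lookup (f * Poly_Mapping.single e 1) k = Poly_Mapping.lookup f (k - e)"
proof -
  have inner: "Sum_any (\<lambda>q. Poly_Mapping.lookup (Poly_Mapping.single e (1::'b)) q when k = l + q)
      = (1 when k = l + e)" for l
  proof -
    have "Sum_any (\<lambda>q. Poly_Mapping.lookup (Poly_Mapping.single e (1::'b)) q when k = l + q)
        = Sum_any (\<lambda>q. (1 when k = l + e) when q = e)"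
      by (rule Sum_any.cong) (auto simp: lookup_single when_def)
    then show ?thesis by simp
  qed
  have "Poly_Mapping.lookup (f * Poly_Mapping.single e 1) k
      = Sum_any (\<lambda>l. Poly_Mapping.lookup f l * (1 when k = l + e))"
    by (simp only: lookup_mult inner)
  also have "\<dots> = Sum_any (\<lambda>l. Poly_Mapping.lookup f l when l = k - e)"
    by (rule Sum_any.cong) (auto simp: when_def algebra_simps)
  finally show ?thesis by simp
qed

lemma single_sum_one:
  "Poly_Mapping.single (sum g S) 1 = (\<Prod>v\<in>S. Poly_Mapping.single (g v) 1 :: 'a::comm_monoid_add \<Rightarrow>\<^sub>0 'b::comm_semiring_1)"
proof (induction S rule: infinite_finite_induct)
  case (insert x F)
  have "Poly_Mapping.single (g x + sum g F) (1::'b) = Poly_Mapping.single (g x) 1 * Poly_Mapping.single (sum g F) 1"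
    by (simp add: mult_single)
  then show ?case using insert by simp
qed simp_all

lemma var_power: "var i ^ j = Poly_Mapping.single (Poly_Mapping.single i (int j)) 1"
proof (induction j)
  case (Suc j)
  then show ?case
    by (simp add: var_def mult_single single_add[symmetric] add.commute)
qed simp

lemma lookup_var_mult:
  "Poly_Mapping.lookup (var i * f) m = Poly_Mapping.lookup f (m - Poly_Mapping.single i 1)"
  using lookup_mult_single_one[of f "Poly_Mapping.single i 1" m] by (simp add: var_def mult.commute)

definition into_poly_ring :: "nat set \<Rightarrow> ('a \<Rightarrow> lpoly) \<Rightarrow> bool" where
  "into_poly_ring V f \<longleftrightarrow> (\<forall>c. \<forall>m\<in>Poly_Mapping.keys (f c). \<forall>v.
       0 \<le> Poly_Mapping.lookup m v \<and> (v \<notin> V \<longrightarrow> Poly_Mapping.lookup m v = 0))"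

lemma into_poly_ring_lookup_eq_0:
  assumes "into_poly_ring V f" "Poly_Mapping.lookup m i \<noteq> 0" "i \<notin> V"
  shows "Poly_Mapping.lookup (f c) m = 0"
  using assms unfolding into_poly_ring_def by (metis in_keys_iff)

lemma lookup_eval_poly_var:
  assumes V: "into_poly_ring V f" "i \<notin> V" and f0: "f 0 = 0"
  shows "Poly_Mapping.lookup (eval_poly f (var i) p) m =
    (if 0 \<le> Poly_Mapping.lookup m i
     then Poly_Mapping.lookup (f (coeff p (nat (Poly_Mapping.lookup m i))))
            (m - Poly_Mapping.single i (Poly_Mapping.lookup m i))
     else 0)"
proof (induction p arbitrary: m rule: pCons_induct)
  case 0 then show ?case by (simp add: f0)
next
  case (pCons a p)
  note fz = into_poly_ring_lookup_eq_0[OF V(1) _ V(2)]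
  have eq: "Poly_Mapping.lookup (eval_poly f (var i) (pCons a p)) m =
      Poly_Mapping.lookup (f a) m + Poly_Mapping.lookup (eval_poly f (var i) p) (m - Poly_Mapping.single i 1)"
    by (simp add: eval_poly_pCons f0 lookup_add lookup_var_mult)
  have li: "Poly_Mapping.lookup (m - Poly_Mapping.single i 1) i = Poly_Mapping.lookup m i - 1"
    by (simp add: lookup_minus)
  consider "Poly_Mapping.lookup m i < 0" | "Poly_Mapping.lookup m i = 0" | "Poly_Mapping.lookup m i > 0"
    by linarith
  then show ?case
  proof cases
    case 1 then show ?thesis using eq pCons.IH[of "m - Poly_Mapping.single i 1"] li fz[of m a] by simp
  next
    case 2 then show ?thesis using eq pCons.IH[of "m - Poly_Mapping.single i 1"] li by simp
  next
    case 3
    then obtain j where j: "Poly_Mapping.lookup m i = int (Suc j)"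
      by (metis gr0_implies_Suc zero_less_imp_eq_int)
    have "nat (1 + int j) = Suc j" by simp
    then show ?thesis using eq pCons.IH[of "m - Poly_Mapping.single i 1"] li fz[of m a] j
      by (simp add: diff_diff_eq single_add)
  qed
qed

lemma into_poly_ring_eval_poly_var:
  assumes V: "into_poly_ring V f" "i \<notin> V" and f0: "f 0 = 0"
  shows "into_poly_ring (insert i V) (eval_poly f (var i))"
  unfolding into_poly_ring_def
proof (intro allI ballI)
  fix p m v assume "m \<in> Poly_Mapping.keys (eval_poly f (var i) p)"
  then have nz: "Poly_Mapping.lookup (eval_poly f (var i) p) m \<noteq> 0" by (simp add: in_keys_iff)
  then have mi: "0 \<le> Poly_Mapping.lookup m i"
    using lookup_eval_poly_var[OF assms, of p m] by (auto split: if_splits)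
  define m' where "m' = m - Poly_Mapping.single i (Poly_Mapping.lookup m i)"
  have "m' \<in> Poly_Mapping.keys (f (coeff p (nat (Poly_Mapping.lookup m i))))"
    using nz mi lookup_eval_poly_var[OF assms, of p m] by (simp add: in_keys_iff m'_def)
  then have h: "0 \<le> Poly_Mapping.lookup m' v \<and> (v \<notin> V \<longrightarrow> Poly_Mapping.lookup m' v = 0)"
    using V(1) unfolding into_poly_ring_def by blast
  have "Poly_Mapping.lookup m' v = (if v = i then 0 else Poly_Mapping.lookup m v)"
    by (simp add: m'_def lookup_minus lookup_single when_def)
  then show "0 \<le> Poly_Mapping.lookup m v \<and> (v \<notin> insert i V \<longrightarrow> Poly_Mapping.lookup m v = 0)"
    using h mi by (auto split: if_splits)
qed

lemma inj_eval_poly_var: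
  assumes V: "into_poly_ring V f" "i \<notin> V" and f0: "f 0 = 0" and inj: "inj f"
  shows "inj (eval_poly f (var i))"
proof (rule injI)
  fix p q assume eq: "eval_poly f (var i) p = eval_poly f (var i) q"
  have "f (coeff p j) = f (coeff q j)" for j
  proof (rule poly_mapping_eqI)
    fix m0
    show "Poly_Mapping.lookup (f (coeff p j)) m0 = Poly_Mapping.lookup (f (coeff q j)) m0"
    proof (cases "Poly_Mapping.lookup m0 i = 0")
      case True
      define m where "m = m0 + Poly_Mapping.single i (int j)"
      have "Poly_Mapping.lookup m i = int j" "m - Poly_Mapping.single i (int j) = m0"
        using True by (simp_all add: m_def lookup_add)
      then show ?thesis
        using arg_cong[OF eq, of "\<lambda>x. Poly_Mapping.lookup x m"] by (simp add: lookup_eval_poly_var[OF V f0])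
    next
      case False then show ?thesis using into_poly_ring_lookup_eq_0[OF V(1) _ V(2)] by simp
    qed
  qed
  then show "p = q" using inj by (simp add: poly_eq_iff injD)
qed

lemma eval_poly_var_props:
  assumes "is_ring_hom f" "into_poly_ring V f" "inj f" "i \<notin> V"
  shows "is_ring_hom (eval_poly f (var i))" "into_poly_ring (insert i V) (eval_poly f (var i))"
    "inj (eval_poly f (var i))"
  using assms is_ring_hom_eval_poly into_poly_ring_eval_poly_var inj_eval_poly_var is_ring_homD(1)
  by blast+

section \<open>The polynomial ring \<open>\<int>[a][k\<^sub>0,k\<^sub>1,l\<^sub>0,l\<^sub>1]\<close> inside the Laurent ring\<close>

text \<open>The coefficient ring \<open>\<int>[a\<^sub>1,a\<^sub>2,a\<^sub>3,a\<^sub>5,a\<^sub>6]\<close> and the ring \<open>\<int>[a][k\<^sub>0,k\<^sub>1,l\<^sub>0,l\<^sub>1]\<close> are modelled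
  as iterated univariate polynomial rings (innermost variable \<open>a\<^sub>1\<close>, resp. \<open>k\<^sub>0\<close>), so that they
  are factorial by the library.\<close>

type_synonym apoly = "int poly poly poly poly poly"
type_synonym klpoly = "apoly poly poly poly poly"

definition of_apoly :: "apoly \<Rightarrow> lpoly" where
  "of_apoly = eval_poly (eval_poly (eval_poly (eval_poly (eval_poly of_int (var 1)) (var 2)) (var 3)) (var 5)) (var 6)"

definition of_klpoly :: "klpoly \<Rightarrow> lpoly" where
  "of_klpoly = eval_poly (eval_poly (eval_poly (eval_poly of_apoly (var 10)) (var 11)) (var 20)) (var 21)"

abbreviation const_kl :: "apoly \<Rightarrow> klpoly" where
  "const_kl c \<equiv> [:[:[:[:c:]:]:]:]"

lemma of_apoly_props: "is_ring_hom of_apoly" "into_poly_ring coeff_vars of_apoly" "inj of_apoly"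
proof -
  have "is_ring_hom (of_int :: int \<Rightarrow> lpoly)" by (simp add: is_ring_hom_def)
  moreover have "into_poly_ring {} (of_int :: int \<Rightarrow> lpoly)"
    by (auto simp: into_poly_ring_def single_of_int[symmetric] simp del: single_of_int split: if_splits)
  moreover have "inj (of_int :: int \<Rightarrow> lpoly)" by (rule injI) simp
  ultimately have s1: "is_ring_hom (eval_poly of_int (var 1))"
    "into_poly_ring {1} (eval_poly (of_int :: int \<Rightarrow> lpoly) (var 1))" "inj (eval_poly of_int (var 1))"
    using eval_poly_var_props[of of_int "{}" 1] by simp_all
  note s2 = eval_poly_var_props[OF s1, of 2, simplified]
  note s3 = eval_poly_var_props[OF s2, of 3, simplified]
  note s5 = eval_poly_var_props[OF s3, of 5, simplified]
  note s6 = eval_poly_var_props[OF s5, of 6, simplified]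
  show "is_ring_hom of_apoly" "into_poly_ring coeff_vars of_apoly" "inj of_apoly"
    using s6 by (simp_all add: of_apoly_def coeff_vars_def insert_commute)
qed

lemma of_klpoly_props:
  "is_ring_hom of_klpoly" "into_poly_ring (coeff_vars \<union> laurent_vars) of_klpoly" "inj of_klpoly"
proof -
  note s10 = eval_poly_var_props[OF of_apoly_props, of 10, simplified coeff_vars_def, simplified]
  note s11 = eval_poly_var_props[OF s10, of 11, simplified]
  note s20 = eval_poly_var_props[OF s11, of 20, simplified]
  note s21 = eval_poly_var_props[OF s20, of 21, simplified]
  show "is_ring_hom of_klpoly" "into_poly_ring (coeff_vars \<union> laurent_vars) of_klpoly" "inj of_klpoly"
    using s21 by (simp_all add: of_klpoly_def coeff_vars_def laurent_vars_def insert_commute)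
qed

lemmas of_apoly_simps [simp] = is_ring_hom_simps[OF of_apoly_props(1)]
lemmas of_klpoly_simps [simp] = is_ring_hom_simps[OF of_klpoly_props(1)]

lemma of_apoly_eq_iff [simp]: "of_apoly x = of_apoly y \<longleftrightarrow> x = y"
  using of_apoly_props(3) by (meson injD)

lemma of_klpoly_eq_iff [simp]: "of_klpoly x = of_klpoly y \<longleftrightarrow> x = y"
  using of_klpoly_props(3) by (meson injD)

lemma of_klpoly_eq_0_iff [simp]: "of_klpoly x = 0 \<longleftrightarrow> x = 0"
  using of_klpoly_eq_iff[of x 0] by simp

lemma of_apoly_eq_0_iff [simp]: "of_apoly x = 0 \<longleftrightarrow> x = 0"
  using of_apoly_eq_iff[of x 0] by simp

lemma of_klpoly_const_kl [simp]: "of_klpoly (const_kl c) = of_apoly c"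
  by (simp add: of_klpoly_def eval_poly_const)

definition "A1 = ([:[:[:[:[:0, 1:]:]:]:]:] :: apoly)"
definition "A2 = ([:[:[:[:0, 1:]:]:]:] :: apoly)"
definition "A3 = ([:[:[:0, 1:]:]:] :: apoly)"
definition "A5 = ([:[:0, 1:]:] :: apoly)"
definition "A6 = ([:0, 1:] :: apoly)"
definition "K0 = ([:[:[:[:0, 1:]:]:]:] :: klpoly)"
definition "K1 = ([:[:[:0, 1:]:]:] :: klpoly)"
definition "L0 = ([:[:0, 1:]:] :: klpoly)"
definition "L1 = ([:0, 1:] :: klpoly)"

lemma of_apoly_vars:
  "of_apoly A1 = a1" "of_apoly A2 = a2" "of_apoly A3 = a3" "of_apoly A5 = a5" "of_apoly A6 = a6"
  by (simp_all add: of_apoly_def A1_def A2_def A3_def A5_def A6_def a1_def a2_def a3_def a5_def a6_def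
      eval_poly_const eval_poly_pCons eval_poly_1)

lemma of_klpoly_vars: "of_klpoly K0 = k0" "of_klpoly K1 = k1" "of_klpoly L0 = l0" "of_klpoly L1 = l1"
  by (simp_all add: of_klpoly_def K0_def K1_def L0_def L1_def k0_def k1_def l0_def l1_def
      eval_poly_const eval_poly_pCons eval_poly_1)

lemma var_in_range_of_klpoly:
  assumes "v \<in> coeff_vars \<union> laurent_vars"
  shows "var v \<in> range of_klpoly"
proof -
  have "var v \<in> of_klpoly ` {const_kl A1, const_kl A2, const_kl A3, const_kl A5, const_kl A6, K0, K1, L0, L1}"
    using assms by (auto simp: coeff_vars_def laurent_vars_def of_apoly_vars of_klpoly_vars
        a1_def a2_def a3_def a5_def a6_def k0_def k1_def l0_def l1_def)
  then show ?thesis by blast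
qed

lemma monomial_in_range_of_klpoly:
  assumes m: "\<forall>v. 0 \<le> Poly_Mapping.lookup m v \<and>
                  (v \<notin> coeff_vars \<union> laurent_vars \<longrightarrow> Poly_Mapping.lookup m v = 0)"
  shows "Poly_Mapping.single m 1 \<in> range of_klpoly"
proof -
  define V where "V = coeff_vars \<union> laurent_vars"
  have fin: "finite V" by (simp add: V_def coeff_vars_def laurent_vars_def)
  define X where "X v = inv of_klpoly (var v)" for v
  have X: "of_klpoly (X v) = var v" if "v \<in> V" for v
    using var_in_range_of_klpoly[of v] that by (simp add: X_def V_def f_inv_into_f)
  have m_sum: "m = (\<Sum>v\<in>V. Poly_Mapping.single v (Poly_Mapping.lookup m v))"
  proof (rule poly_mapping_eqI)
    fix w
    have "Poly_Mapping.lookup (\<Sum>v\<in>V. Poly_Mapping.single v (Poly_Mapping.lookup m v)) w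
        = (\<Sum>v\<in>V. if v = w then Poly_Mapping.lookup m v else 0)"
      by (simp add: lookup_sum lookup_single when_def eq_commute)
    also have "\<dots> = Poly_Mapping.lookup m w" using m fin by (auto simp: sum.delta' V_def)
    finally show "Poly_Mapping.lookup m w = Poly_Mapping.lookup (\<Sum>v\<in>V. Poly_Mapping.single v (Poly_Mapping.lookup m v)) w"
      by simp
  qed
  have "(Poly_Mapping.single m 1 :: lpoly) = (\<Prod>v\<in>V. Poly_Mapping.single (Poly_Mapping.single v (Poly_Mapping.lookup m v)) 1)"
    by (subst m_sum) (rule single_sum_one)
  also have "\<dots> = (\<Prod>v\<in>V. of_klpoly (X v) ^ nat (Poly_Mapping.lookup m v))"
    using m by (intro prod.cong refl) (simp add: X var_power)
  also have "\<dots> = of_klpoly (\<Prod>v\<in>V. X v ^ nat (Poly_Mapping.lookup m v))"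
    by (simp add: is_ring_hom_prod[OF of_klpoly_props(1)])
  finally show ?thesis by simp
qed

definition LR_monomials :: "(nat \<Rightarrow>\<^sub>0 int) set" where
  "LR_monomials = {m. \<forall>v. (v \<notin> coeff_vars \<union> laurent_vars \<longrightarrow> Poly_Mapping.lookup m v = 0)
                          \<and> (v \<in> coeff_vars \<longrightarrow> Poly_Mapping.lookup m v \<ge> 0)}"

lemma LR_iff_keys: "p \<in> LR \<longleftrightarrow> Poly_Mapping.keys p \<subseteq> LR_monomials"
  by (auto simp: LR_def LR_monomials_def)

lemma LR_0 [simp]: "0 \<in> LR" and LR_1 [simp]: "1 \<in> LR"
  by (auto simp: LR_iff_keys LR_monomials_def)

lemma LR_add: "x \<in> LR \<Longrightarrow> y \<in> LR \<Longrightarrow> x + y \<in> LR"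
  using keys_add[of x y] by (auto simp: LR_iff_keys)

lemma LR_diff: "x \<in> LR \<Longrightarrow> y \<in> LR \<Longrightarrow> x - y \<in> LR"
  using keys_diff[of x y] by (auto simp: LR_iff_keys)

lemma LR_mult: "x \<in> LR \<Longrightarrow> y \<in> LR \<Longrightarrow> x * y \<in> LR"
  using keys_mult[of x y] by (fastforce simp: LR_iff_keys LR_monomials_def lookup_add)

lemma LR_power: "x \<in> LR \<Longrightarrow> x ^ n \<in> LR"
  by (induction n) (auto intro: LR_mult)

lemma LR_numeral [simp]: "numeral n \<in> LR"
  by (induction n) (auto simp only: numeral_One numeral_Bit0 numeral_Bit1 intro!: LR_add LR_1)

lemma of_klpoly_in_LR [simp]: "of_klpoly X \<in> LR"
  using of_klpoly_props(2) by (auto simp: LR_def into_poly_ring_def coeff_vars_def laurent_vars_def)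

lemma of_apoly_in_LR [simp]: "of_apoly c \<in> LR"
  using of_klpoly_in_LR[of "const_kl c"] by simp

lemma coeffs_in_LR [simp]: "a1 \<in> LR" "a2 \<in> LR" "a3 \<in> LR" "a5 \<in> LR" "a6 \<in> LR"
  using of_apoly_in_LR by (simp_all flip: of_apoly_vars)

text \<open>The denominators of \<open>LR\<close> are the powers of the monomial \<open>k\<^sub>0k\<^sub>1l\<^sub>0l\<^sub>1\<close>.\<close>

definition KL :: klpoly where "KL = K0 * K1 * L0 * L1"

definition laurent_exps :: "nat \<Rightarrow> (nat \<Rightarrow>\<^sub>0 int)" where
  "laurent_exps N = (\<Sum>v\<in>laurent_vars. Poly_Mapping.single v (int N))"

definition KL_inv :: lpoly where "KL_inv = Poly_Mapping.single (- laurent_exps 1) 1"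

lemma of_klpoly_KL_power: "of_klpoly KL ^ N = Poly_Mapping.single (laurent_exps N) 1"
proof (induction N)
  case 0 then show ?case by (simp add: laurent_exps_def)
next
  case (Suc N)
  have "of_klpoly KL = Poly_Mapping.single (laurent_exps 1) 1"
    by (simp add: KL_def of_klpoly_vars k0_def k1_def l0_def l1_def var_def mult_single
        laurent_exps_def laurent_vars_def add.assoc)
  moreover have "laurent_exps 1 + laurent_exps N = laurent_exps (Suc N)"
    by (simp add: laurent_exps_def single_add sum.distrib)
  ultimately show ?case using Suc by (simp add: mult_single)
qed

lemma KL_power_inverse: "of_klpoly KL ^ N * KL_inv ^ N = 1"
  using of_klpoly_KL_power[of 1] by (simp add: power_mult_distrib[symmetric] KL_inv_def mult_single)

lemma KL_inv_in_LR [simp]: "KL_inv \<in> LR"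
  by (auto simp: LR_iff_keys KL_inv_def LR_monomials_def laurent_exps_def laurent_vars_def
      coeff_vars_def lookup_add lookup_minus lookup_single when_def)

lemma KL_power_nonzero [simp]: "of_klpoly KL ^ N \<noteq> 0"
  by (metis KL_power_inverse mult_zero_left zero_neq_one)

lemma LR_clear_denominator:
  assumes "x \<in> LR"
  obtains N X where "x * of_klpoly KL ^ N = of_klpoly X"
proof -
  have "Poly_Mapping.keys x \<subseteq> LR_monomials" using assms by (simp add: LR_iff_keys)
  then have "\<exists>N X. x * of_klpoly KL ^ N = of_klpoly X"
  proof (induction x rule: frag_induction)
    case zero then show ?case by (metis mult_zero_left of_klpoly_simps(1))
  next
    case (one m)
    define N where "N = nat (- Poly_Mapping.lookup m 10) + nat (- Poly_Mapping.lookup m 11)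
       + nat (- Poly_Mapping.lookup m 20) + nat (- Poly_Mapping.lookup m 21)"
    define m' where "m' = m + laurent_exps N"
    have "Poly_Mapping.lookup m' v = Poly_Mapping.lookup m v + (if v \<in> laurent_vars then int N else 0)" for v
      by (auto simp: m'_def laurent_exps_def laurent_vars_def lookup_add lookup_sum lookup_single when_def)
    then have "\<forall>v. 0 \<le> Poly_Mapping.lookup m' v \<and> (v \<notin> coeff_vars \<union> laurent_vars \<longrightarrow> Poly_Mapping.lookup m' v = 0)"
      using one by (auto simp: LR_monomials_def coeff_vars_def laurent_vars_def N_def)
    moreover have "frag_of m * of_klpoly KL ^ N = Poly_Mapping.single m' 1"
      by (simp add: of_klpoly_KL_power mult_single m'_def)
    ultimately show ?case using monomial_in_range_of_klpoly by (metis rangeE)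
  next
    case (diff a b)
    then obtain N X M Y where a: "a * of_klpoly KL ^ N = of_klpoly X" and b: "b * of_klpoly KL ^ M = of_klpoly Y"
      by blast
    have "(a - b) * of_klpoly KL ^ (N + M) = of_klpoly (X * KL ^ M - Y * KL ^ N)"
      by (simp add: algebra_simps power_add a[symmetric] b[symmetric])
    then show ?case by blast
  qed
  then show ?thesis using that by blast
qed

lemma LR_eq_fraction: "x * of_klpoly KL ^ N = of_klpoly X \<Longrightarrow> x = of_klpoly X * KL_inv ^ N"
  by (metis KL_power_inverse mult.assoc mult.right_neutral)

lemma dvd_inI: "q \<in> LR \<Longrightarrow> x = d * q \<Longrightarrow> dvd_in LR d x"
  by (auto simp: dvd_in_def)

lemma dvd_in_refl: "dvd_in LR x x"
  by (rule dvd_inI[of 1]) auto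

lemma dvd_in_0: "dvd_in LR x 0"
  by (rule dvd_inI[of 0]) auto

lemma dvd_in_mult_self: "b \<in> LR \<Longrightarrow> dvd_in LR a (a * b)"
  by (rule dvd_inI) auto

lemma dvd_in_trans: "dvd_in LR a b \<Longrightarrow> dvd_in LR b c \<Longrightarrow> dvd_in LR a c"
  by (auto simp: dvd_in_def mult.assoc intro!: LR_mult)

lemma dvd_in_mult_right: "c \<in> LR \<Longrightarrow> dvd_in LR a b \<Longrightarrow> dvd_in LR a (b * c)"
  by (auto simp: dvd_in_def mult.assoc intro!: LR_mult)

lemma dvd_in_mult_left: "c \<in> LR \<Longrightarrow> dvd_in LR a b \<Longrightarrow> dvd_in LR a (c * b)"
  using dvd_in_mult_right[of c a b] by (simp add: mult.commute)

lemma dvd_in_diff: "dvd_in LR a b \<Longrightarrow> dvd_in LR a c \<Longrightarrow> dvd_in LR a (b - c)"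
  unfolding dvd_in_def by (metis LR_diff right_diff_distrib)

lemma unit_in_1: "unit_in LR 1"
  by (auto simp: unit_in_def)

lemma not_unit_in_0: "\<not> unit_in LR 0"
  by (simp add: unit_in_def)

lemma unit_in_mult: "unit_in LR a \<Longrightarrow> unit_in LR b \<Longrightarrow> unit_in LR (a * b)"
proof -
  assume "unit_in LR a" "unit_in LR b"
  then obtain va vb where "a \<in> LR" "b \<in> LR" "va \<in> LR" "vb \<in> LR" "a * va = 1" "b * vb = 1"
    by (auto simp: unit_in_def)
  moreover have "(a * b) * (va * vb) = (a * va) * (b * vb)" by (simp add: ac_simps)
  ultimately show ?thesis unfolding unit_in_def by (auto intro!: LR_mult bexI[of _ "va * vb"])
qed

lemma unit_in_dvd_in: "unit_in LR u \<Longrightarrow> x \<in> LR \<Longrightarrow> dvd_in LR u x"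
proof -
  assume "unit_in LR u" "x \<in> LR"
  then obtain v where "v \<in> LR" "u * v = 1" by (auto simp: unit_in_def)
  then have "x = u * (v * x)" by (simp add: mult.assoc[symmetric])
  then show ?thesis using \<open>v \<in> LR\<close> \<open>x \<in> LR\<close> by (intro dvd_inI[OF LR_mult])
qed

lemma dvd_in_unit_imp_unit_in: "d \<in> LR \<Longrightarrow> dvd_in LR d u \<Longrightarrow> unit_in LR u \<Longrightarrow> unit_in LR d"
proof -
  assume "d \<in> LR" "dvd_in LR d u" "unit_in LR u"
  then obtain q v where "q \<in> LR" "u = d * q" "v \<in> LR" "u * v = 1" by (auto simp: unit_in_def dvd_in_def)
  then have "d * (q * v) = 1" by (simp add: mult.assoc)
  then show ?thesis using \<open>d \<in> LR\<close> \<open>q \<in> LR\<close> \<open>v \<in> LR\<close> by (auto simp: unit_in_def intro!: LR_mult)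
qed

lemma unit_in_KL_power: "unit_in LR (of_klpoly KL ^ N)"
  and unit_in_KL_inv_power: "unit_in LR (KL_inv ^ N)"
  unfolding unit_in_def using KL_power_inverse[of N]
  by (metis of_klpoly_in_LR KL_inv_in_LR LR_power mult.commute)+

lemma dvd_in_mult_unit_left_iff: "unit_in LR u \<Longrightarrow> dvd_in LR (d * u) x \<longleftrightarrow> dvd_in LR d x"
proof -
  assume "unit_in LR u"
  then obtain v where v: "u \<in> LR" "v \<in> LR" "u * v = 1" by (auto simp: unit_in_def)
  show ?thesis
  proof
    assume "dvd_in LR (d * u) x"
    then obtain q where "q \<in> LR" "x = d * u * q" by (auto simp: dvd_in_def)
    then show "dvd_in LR d x" using v by (intro dvd_inI[of "u * q"]) (auto intro: LR_mult simp: ac_simps)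
  next
    assume "dvd_in LR d x"
    then obtain q where "q \<in> LR" "x = d * q" by (auto simp: dvd_in_def)
    moreover have "d * q = d * u * (v * q)" using v by (simp add: ac_simps)
    ultimately show "dvd_in LR (d * u) x" using v by (intro dvd_inI[of "v * q"]) (auto intro: LR_mult)
  qed
qed

lemma dvd_in_mult_unit_right_iff:
  "unit_in LR u \<Longrightarrow> x \<in> LR \<Longrightarrow> dvd_in LR d (x * u) \<longleftrightarrow> dvd_in LR d x"
proof -
  assume "unit_in LR u" "x \<in> LR"
  then obtain v where v: "u \<in> LR" "v \<in> LR" "u * v = 1" by (auto simp: unit_in_def)
  have "x * u * v = x" using v by (simp add: mult.assoc)
  then show ?thesis using dvd_in_mult_right[OF v(2), of d "x * u"] dvd_in_mult_right[OF v(1), of d x]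
    by (metis (no_types))
qed

lemma dvd_in_of_klpoly_iff: "dvd_in LR (of_klpoly X) (of_klpoly Y) \<longleftrightarrow> (\<exists>M. X dvd Y * KL ^ M)"
proof
  assume "dvd_in LR (of_klpoly X) (of_klpoly Y)"
  then obtain q where q: "q \<in> LR" "of_klpoly Y = of_klpoly X * q" by (auto simp: dvd_in_def)
  obtain N Q where Q: "q * of_klpoly KL ^ N = of_klpoly Q" using LR_clear_denominator[OF q(1)] .
  have "of_klpoly (Y * KL ^ N) = of_klpoly (X * Q)" by (simp add: q(2) Q[symmetric] mult.assoc)
  then show "\<exists>M. X dvd Y * KL ^ M" by (metis dvdI of_klpoly_eq_iff)
next
  assume "\<exists>M. X dvd Y * KL ^ M"
  then obtain M Q where Q: "Y * KL ^ M = X * Q" by (auto elim: dvdE)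
  have "of_klpoly Y = of_klpoly (Y * KL ^ M) * KL_inv ^ M"
    by (simp add: mult.assoc KL_power_inverse)
  also have "\<dots> = of_klpoly X * (of_klpoly Q * KL_inv ^ M)" by (simp add: Q mult.assoc)
  finally show "dvd_in LR (of_klpoly X) (of_klpoly Y)"
    by (rule dvd_inI[rotated]) (simp add: LR_mult LR_power)
qed

lemma unit_in_of_klpoly_iff: "unit_in LR (of_klpoly U) \<longleftrightarrow> (\<exists>M. U dvd KL ^ M)"
proof -
  have "unit_in LR (of_klpoly U) \<longleftrightarrow> dvd_in LR (of_klpoly U) (of_klpoly 1)"
    by (auto simp: unit_in_def dvd_in_def)
  then show ?thesis using dvd_in_of_klpoly_iff[of U 1] by simp
qed

lemma dvd_in_iff_cleared:
  assumes "d * of_klpoly KL ^ N = of_klpoly D" "x * of_klpoly KL ^ M = of_klpoly X" "x \<in> LR"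
  shows "dvd_in LR d x \<longleftrightarrow> (\<exists>M. D dvd X * KL ^ M)"
proof -
  have "dvd_in LR d x \<longleftrightarrow> dvd_in LR (d * of_klpoly KL ^ N) (x * of_klpoly KL ^ M)"
    using dvd_in_mult_unit_left_iff dvd_in_mult_unit_right_iff assms(3) unit_in_KL_power by simp
  then show ?thesis using assms(1,2) dvd_in_of_klpoly_iff by simp
qed

text \<open>Euclid's lemma in \<open>LR\<close>, inherited from the factorial ring \<open>\<int>[a][k\<^sub>0,k\<^sub>1,l\<^sub>0,l\<^sub>1]\<close>: a common
  factor of the numerators of two coprime elements divides a power of \<open>k\<^sub>0k\<^sub>1l\<^sub>0l\<^sub>1\<close>.\<close>

lemma coprime_in_dvd_in_mult:
  assumes xyz: "x \<in> LR" "y \<in> LR" "z \<in> LR" and cop: "coprime_in LR x y" and dv: "dvd_in LR x (y * z)"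
  shows "dvd_in LR x z"
proof -
  obtain a X where xa: "x * of_klpoly KL ^ a = of_klpoly X" using LR_clear_denominator[OF xyz(1)] .
  obtain b Y where yb: "y * of_klpoly KL ^ b = of_klpoly Y" using LR_clear_denominator[OF xyz(2)] .
  obtain c Z where zc: "z * of_klpoly KL ^ c = of_klpoly Z" using LR_clear_denominator[OF xyz(3)] .
  have "X \<noteq> 0 \<or> Y \<noteq> 0"
  proof (rule ccontr)
    assume "\<not> (X \<noteq> 0 \<or> Y \<noteq> 0)"
    then have "x = 0" "y = 0" using LR_eq_fraction[OF xa] LR_eq_fraction[OF yb] by simp_all
    then show False using cop not_unit_in_0 dvd_in_0 by (auto simp: coprime_in_def)
  qed
  define g where "g = gcd X Y"
  define X1 where "X1 = X div g"
  define Y1 where "Y1 = Y div g"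
  have X: "X = g * X1" and Y: "Y = g * Y1" by (simp_all add: X1_def Y1_def g_def)
  have cop1: "coprime X1 Y1"
    using div_gcd_coprime[of X Y] \<open>X \<noteq> 0 \<or> Y \<noteq> 0\<close> by (simp add: X1_def Y1_def g_def)
  have gnz: "g \<noteq> 0" using \<open>X \<noteq> 0 \<or> Y \<noteq> 0\<close> by (simp add: g_def)
  have "dvd_in LR (of_klpoly g) x" "dvd_in LR (of_klpoly g) y"
    using LR_eq_fraction[OF xa] LR_eq_fraction[OF yb] X Y
    by (auto intro!: dvd_inI[of "_ * KL_inv ^ _"] LR_mult LR_power simp: mult.assoc)
  then have "unit_in LR (of_klpoly g)" using cop by (auto simp: coprime_in_def)
  then obtain M where gM: "g dvd KL ^ M" using unit_in_of_klpoly_iff by blast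
  have yz: "(y * z) * of_klpoly KL ^ (b + c) = of_klpoly (Y * Z)"
    by (simp add: power_add yb[symmetric] zc[symmetric] ac_simps)
  obtain M' where "X dvd Y * Z * KL ^ M'"
    using dv dvd_in_iff_cleared[OF xa yz LR_mult[OF xyz(2,3)]] by blast
  then have "X1 dvd Y1 * (Z * KL ^ M')" using gnz by (simp add: X Y ac_simps)
  then have "X1 dvd Z * KL ^ M'" using cop1 by (simp add: coprime_dvd_mult_right_iff)
  then have "g * X1 dvd KL ^ M * (Z * KL ^ M')" using gM by (rule mult_dvd_mono[rotated])
  then have "X dvd Z * KL ^ (M + M')" by (simp add: X power_add ac_simps)
  then show ?thesis using dvd_in_iff_cleared[OF xa zc xyz(3)] by blast
qed

lemma coprime_in_commute: "coprime_in LR x y \<Longrightarrow> coprime_in LR y x"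
  by (auto simp: coprime_in_def)

lemma coprime_in_unit: "unit_in LR u \<Longrightarrow> coprime_in LR u x"
  by (auto simp: coprime_in_def intro: dvd_in_unit_imp_unit_in)

lemma coprime_in_dvd_in: "d \<in> LR \<Longrightarrow> dvd_in LR d x \<Longrightarrow> coprime_in LR x y \<Longrightarrow> coprime_in LR d y"
  unfolding coprime_in_def by (blast intro: dvd_in_trans)

lemma coprime_in_mult:
  assumes "x \<in> LR" "y \<in> LR" "z \<in> LR" "coprime_in LR x y" "coprime_in LR x z"
  shows "coprime_in LR x (y * z)"
  unfolding coprime_in_def
proof (intro ballI impI)
  fix d assume d: "d \<in> LR" "dvd_in LR d x \<and> dvd_in LR d (y * z)"
  have "coprime_in LR d y" using coprime_in_dvd_in[OF d(1) _ assms(4)] d(2) by blast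
  then have "dvd_in LR d z" using coprime_in_dvd_in_mult[OF d(1) assms(2,3)] d(2) by blast
  then show "unit_in LR d" using assms(5) d by (auto simp: coprime_in_def)
qed

lemma coprime_in_power:
  assumes "x \<in> LR" "y \<in> LR" "coprime_in LR x y"
  shows "coprime_in LR x (y ^ n)"
  by (induction n) (simp_all add: coprime_in_commute coprime_in_unit unit_in_1 coprime_in_mult assms LR_power)

lemma coprime_in_dvd_in_mult':
  assumes "x \<in> LR" "y \<in> LR" "z \<in> LR" "coprime_in LR x y" "dvd_in LR x (z * y)"
  shows "dvd_in LR x z"
  using coprime_in_dvd_in_mult[OF assms(1-4)] assms(5) by (simp add: mult.commute)

section \<open>Evaluation at integer points\<close>

text \<open>The Laurent variables are evaluated at \<open>1\<close>, which makes the evaluation well defined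
  on \<open>LR\<close>.\<close>

type_synonym point = "int \<times> int \<times> int \<times> int \<times> int"

definition eval_apoly :: "point \<Rightarrow> apoly \<Rightarrow> int" where
  "eval_apoly pt = (case pt of (b1, b2, b3, b5, b6) \<Rightarrow>
     eval_poly (eval_poly (eval_poly (eval_poly (eval_poly (\<lambda>x. x) b1) b2) b3) b5) b6)"

definition eval_klpoly :: "point \<Rightarrow> klpoly \<Rightarrow> int" where
  "eval_klpoly pt = eval_poly (eval_poly (eval_poly (eval_poly (eval_apoly pt) 1) 1) 1) 1"

lemma is_ring_hom_eval_apoly: "is_ring_hom (eval_apoly pt)"
proof -
  have "is_ring_hom (\<lambda>x::int. x)" by (simp add: is_ring_hom_def)
  then show ?thesis by (cases pt) (simp add: eval_apoly_def is_ring_hom_eval_poly)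
qed

lemma is_ring_hom_eval_klpoly: "is_ring_hom (eval_klpoly pt)"
  by (simp add: eval_klpoly_def is_ring_hom_eval_poly is_ring_hom_eval_apoly)

lemmas eval_apoly_simps [simp] = is_ring_hom_simps[OF is_ring_hom_eval_apoly]
lemmas eval_klpoly_simps [simp] = is_ring_hom_simps[OF is_ring_hom_eval_klpoly]

lemma eval_klpoly_const_kl [simp]: "eval_klpoly pt (const_kl c) = eval_apoly pt c"
  by (simp add: eval_klpoly_def eval_poly_const)

lemma eval_apoly_vars: "eval_apoly (b1, b2, b3, b5, b6) A1 = b1" "eval_apoly (b1, b2, b3, b5, b6) A2 = b2"
  "eval_apoly (b1, b2, b3, b5, b6) A3 = b3" "eval_apoly (b1, b2, b3, b5, b6) A5 = b5"
  "eval_apoly (b1, b2, b3, b5, b6) A6 = b6"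
  by (simp_all add: eval_apoly_def A1_def A2_def A3_def A5_def A6_def eval_poly_const eval_poly_pCons eval_poly_1)

lemma eval_klpoly_vars: "eval_klpoly pt K0 = 1" "eval_klpoly pt K1 = 1" "eval_klpoly pt L0 = 1"
  "eval_klpoly pt L1 = 1"
  using is_ring_homD(1,2)[OF is_ring_hom_eval_apoly, of pt]
  by (simp_all add: eval_klpoly_def K0_def K1_def L0_def L1_def eval_poly_const eval_poly_pCons
      eval_poly_1 is_ring_hom_eval_poly is_ring_hom_eval_apoly is_ring_homD(1,2))

lemma eval_klpoly_KL [simp]: "eval_klpoly pt KL = 1"
  by (simp add: KL_def eval_klpoly_vars)

definition cleared :: "lpoly \<Rightarrow> nat \<times> klpoly" where
  "cleared x = (SOME p. x * of_klpoly KL ^ fst p = of_klpoly (snd p))"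

lemma cleared: "x \<in> LR \<Longrightarrow> x * of_klpoly KL ^ fst (cleared x) = of_klpoly (snd (cleared x))"
proof -
  assume "x \<in> LR"
  then obtain N X where "x * of_klpoly KL ^ N = of_klpoly X" by (rule LR_clear_denominator)
  then have "(\<lambda>p. x * of_klpoly KL ^ fst p = of_klpoly (snd p)) (N, X)" by simp
  then show ?thesis unfolding cleared_def by (rule someI)
qed

lemma cleared_unique:
  assumes "x * of_klpoly KL ^ N = of_klpoly X" "x * of_klpoly KL ^ M = of_klpoly Y"
  shows "X * KL ^ M = Y * KL ^ N"
proof -
  have "of_klpoly (X * KL ^ M) = of_klpoly (Y * KL ^ N)"
    by (simp add: assms[symmetric] ac_simps)
  then show ?thesis by (simp only: of_klpoly_eq_iff)
qed

definition eval_LR :: "point \<Rightarrow> lpoly \<Rightarrow> int" where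
  "eval_LR pt x = eval_klpoly pt (snd (cleared x))"

lemma eval_LR_cleared:
  assumes "x \<in> LR" "x * of_klpoly KL ^ N = of_klpoly X"
  shows "eval_LR pt x = eval_klpoly pt X"
  using arg_cong[OF cleared_unique[OF cleared[OF assms(1)] assms(2)], of "eval_klpoly pt"]
  by (simp add: eval_LR_def)

lemma eval_LR_mult: "x \<in> LR \<Longrightarrow> y \<in> LR \<Longrightarrow> eval_LR pt (x * y) = eval_LR pt x * eval_LR pt y"
proof -
  assume xy: "x \<in> LR" "y \<in> LR"
  obtain N X where x: "x * of_klpoly KL ^ N = of_klpoly X" using LR_clear_denominator[OF xy(1)] .
  obtain M Y where y: "y * of_klpoly KL ^ M = of_klpoly Y" using LR_clear_denominator[OF xy(2)] .
  have "(x * y) * of_klpoly KL ^ (N + M) = of_klpoly (X * Y)"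
    by (simp add: power_add x[symmetric] y[symmetric] ac_simps)
  from eval_LR_cleared[OF LR_mult[OF xy] this] show ?thesis
    using eval_LR_cleared[OF xy(1) x] eval_LR_cleared[OF xy(2) y] by simp
qed

lemma eval_LR_add: "x \<in> LR \<Longrightarrow> y \<in> LR \<Longrightarrow> eval_LR pt (x + y) = eval_LR pt x + eval_LR pt y"
proof -
  assume xy: "x \<in> LR" "y \<in> LR"
  obtain N X where x: "x * of_klpoly KL ^ N = of_klpoly X" using LR_clear_denominator[OF xy(1)] .
  obtain M Y where y: "y * of_klpoly KL ^ M = of_klpoly Y" using LR_clear_denominator[OF xy(2)] .
  have "(x + y) * of_klpoly KL ^ (N + M) = of_klpoly (X * KL ^ M + Y * KL ^ N)"
    by (simp add: power_add x[symmetric] y[symmetric] algebra_simps)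
  from eval_LR_cleared[OF LR_add[OF xy] this] show ?thesis
    using eval_LR_cleared[OF xy(1) x] eval_LR_cleared[OF xy(2) y] by simp
qed

lemma eval_LR_of_apoly [simp]: "eval_LR pt (of_apoly c) = eval_apoly pt c"
  using eval_LR_cleared[of "of_apoly c" 0 "const_kl c"] by simp

lemma eval_LR_eq_0_if_dvd_in:
  assumes "x \<in> LR" "dvd_in LR (of_apoly c) x" "eval_apoly pt c = 0"
  shows "eval_LR pt x = 0"
  using assms eval_LR_mult[of "of_apoly c" _ pt] by (auto simp: dvd_in_def)

section \<open>Leading terms\<close>

instance prod :: (ordered_ab_group_add, ordered_ab_group_add) ordered_ab_group_add
  by standard (auto simp: less_eq_prod_def add_strict_left_mono)

instance prod :: (linordered_ab_group_add, linordered_ab_group_add) linordered_ab_group_add ..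

lemma lex_leading_add:
  fixes X Y :: "'a::idom poly" and lmi :: "'a \<Rightarrow> 'b::linorder"
  assumes inner: "\<And>u v. u \<noteq> 0 \<Longrightarrow> v \<noteq> 0 \<Longrightarrow> lmi v < lmi u \<Longrightarrow>
                    u + v \<noteq> 0 \<and> lmi (u + v) = lmi u \<and> lci (u + v) = lci u"
    and nz: "X \<noteq> 0" "Y \<noteq> 0"
    and lt: "(degree Y, lmi (lead_coeff Y)) < (degree X, lmi (lead_coeff X))"
  shows "X + Y \<noteq> 0 \<and> degree (X + Y) = degree X \<and> lmi (lead_coeff (X + Y)) = lmi (lead_coeff X)
         \<and> lci (lead_coeff (X + Y)) = lci (lead_coeff X)"
proof (cases "degree Y < degree X")
  case True
  have d: "degree (X + Y) = degree X" by (rule degree_add_eq_left[OF True])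
  have l: "lead_coeff (X + Y) = lead_coeff X"
    using lead_coeff_add_le[OF True] by (simp only: add.commute)
  have "X + Y \<noteq> 0" using True d by auto
  then show ?thesis using d l by simp
next
  case False
  then have deq: "degree Y = degree X" and lt2: "lmi (lead_coeff Y) < lmi (lead_coeff X)" using lt by auto
  have lnz: "lead_coeff X \<noteq> 0" "lead_coeff Y \<noteq> 0" using nz by auto
  note i = inner[OF lnz lt2]
  have c: "coeff (X + Y) (degree X) = lead_coeff X + lead_coeff Y" using deq by simp
  then have cnz: "coeff (X + Y) (degree X) \<noteq> 0" using i by simp
  have "degree (X + Y) \<le> degree X" using degree_add_le_max[of X Y] deq by simp
  with le_degree[OF cnz] have d: "degree (X + Y) = degree X" by simp
  have l: "lead_coeff (X + Y) = lead_coeff X + lead_coeff Y" using c d by (simp only:)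
  have "X + Y \<noteq> 0" using cnz by (metis coeff_0)
  then show ?thesis using i d l by (simp only:) simp
qed

text \<open>The exponents of \<open>l\<^sub>1, l\<^sub>0, k\<^sub>1, k\<^sub>0\<close> in the lexicographically leading monomial, and its
  coefficient in \<open>\<int>[a]\<close>.\<close>

definition lead_exps :: "klpoly \<Rightarrow> nat \<times> nat \<times> nat \<times> nat" where
  "lead_exps X = (degree X, degree (lead_coeff X), degree (lead_coeff (lead_coeff X)),
     degree (lead_coeff (lead_coeff (lead_coeff X))))"

definition lead_acoeff :: "klpoly \<Rightarrow> apoly" where
  "lead_acoeff X = lead_coeff (lead_coeff (lead_coeff (lead_coeff X)))"

lemma lead_exps_add:
  assumes "X \<noteq> 0" "Y \<noteq> 0" "lead_exps Y < lead_exps X"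
  shows "X + Y \<noteq> 0" "lead_exps (X + Y) = lead_exps X" "lead_acoeff (X + Y) = lead_acoeff X"
proof -
  have L1: "X + Y \<noteq> 0 \<and> degree (X + Y) = degree X \<and> lead_coeff (X + Y) = lead_coeff X"
    if "X \<noteq> 0" "Y \<noteq> 0" "degree Y < degree X" for X Y :: "apoly poly"
  proof -
    have "degree (X + Y) = degree X" by (rule degree_add_eq_left[OF that(3)])
    moreover have "lead_coeff (X + Y) = lead_coeff X"
      using lead_coeff_add_le[OF that(3)] by (simp only: add.commute)
    ultimately show ?thesis using that(3) by auto
  qed
  have L2: "X + Y \<noteq> 0 \<and> (degree (X + Y), degree (lead_coeff (X + Y))) = (degree X, degree (lead_coeff X))
      \<and> lead_coeff (lead_coeff (X + Y)) = lead_coeff (lead_coeff X)"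
    if "X \<noteq> 0" "Y \<noteq> 0" "(degree Y, degree (lead_coeff Y)) < (degree X, degree (lead_coeff X))"
    for X Y :: "apoly poly poly"
    using lex_leading_add[of degree lead_coeff, OF L1 that] unfolding prod.inject by blast
  have L3: "X + Y \<noteq> 0 \<and> (degree (X + Y), degree (lead_coeff (X + Y)), degree (lead_coeff (lead_coeff (X + Y))))
        = (degree X, degree (lead_coeff X), degree (lead_coeff (lead_coeff X)))
      \<and> lead_coeff (lead_coeff (lead_coeff (X + Y))) = lead_coeff (lead_coeff (lead_coeff X))"
    if "X \<noteq> 0" "Y \<noteq> 0" "(degree Y, degree (lead_coeff Y), degree (lead_coeff (lead_coeff Y)))
        < (degree X, degree (lead_coeff X), degree (lead_coeff (lead_coeff X)))"
    for X Y :: "apoly poly poly poly"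
    using lex_leading_add[of "\<lambda>u. (degree u, degree (lead_coeff u))" "\<lambda>u. lead_coeff (lead_coeff u)",
        OF L2 that] unfolding prod.inject by blast
  have "X + Y \<noteq> 0 \<and> lead_exps (X + Y) = lead_exps X \<and> lead_acoeff (X + Y) = lead_acoeff X"
    using lex_leading_add[of "\<lambda>u. (degree u, degree (lead_coeff u), degree (lead_coeff (lead_coeff u)))"
        "\<lambda>u. lead_coeff (lead_coeff (lead_coeff u))", OF L3 assms(1,2)] assms(3)
    unfolding lead_exps_def lead_acoeff_def prod.inject by blast
  then show "X + Y \<noteq> 0" "lead_exps (X + Y) = lead_exps X" "lead_acoeff (X + Y) = lead_acoeff X"
    by blast+
qed

lemma lead_exps_mult:
  assumes nz: "X \<noteq> 0" "Y \<noteq> 0"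
  shows "lead_exps (X * Y) = lead_exps X + lead_exps Y"
proof -
  have n1: "lead_coeff X \<noteq> 0" "lead_coeff Y \<noteq> 0" using nz by auto
  then have n2: "lead_coeff (lead_coeff X) \<noteq> 0" "lead_coeff (lead_coeff Y) \<noteq> 0" by auto
  then have n3: "lead_coeff (lead_coeff (lead_coeff X)) \<noteq> 0" "lead_coeff (lead_coeff (lead_coeff Y)) \<noteq> 0"
    by auto
  show ?thesis
    unfolding lead_exps_def lead_coeff_mult
    by (simp only: degree_mult_eq[OF nz] degree_mult_eq[OF n1] degree_mult_eq[OF n2] degree_mult_eq[OF n3]
        add_Pair)
qed

lemma lead_acoeff_mult: "lead_acoeff (X * Y) = lead_acoeff X * lead_acoeff Y"
  by (simp add: lead_acoeff_def lead_coeff_mult)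

lemma lead_acoeff_eq_0_iff [simp]: "lead_acoeff X = 0 \<longleftrightarrow> X = 0"
  by (simp add: lead_acoeff_def)

lemma KL_eq_monom: "KL = monom (monom (monom (monom 1 1) 1) 1) 1"
  by (simp add: KL_def K0_def K1_def L0_def L1_def monom_Suc monom_0 pCons_one)

lemma lead_exps_KL_power: "lead_exps (KL ^ n) = (n, n, n, n)"
  and lead_acoeff_KL_power: "lead_acoeff (KL ^ n) = 1"
  by (simp_all add: KL_eq_monom monom_power lead_exps_def lead_acoeff_def degree_monom_eq)

lemma KL_nonzero [simp]: "KL \<noteq> 0"
  by (simp add: KL_eq_monom)

lemma lead_exps_const_kl: "lead_exps (const_kl c) = 0" and lead_acoeff_const_kl: "lead_acoeff (const_kl c) = c"
  by (simp_all add: lead_exps_def lead_acoeff_def zero_prod_def)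

definition int_exps :: "nat \<times> nat \<times> nat \<times> nat \<Rightarrow> int \<times> int \<times> int \<times> int" where
  "int_exps = map_prod int (map_prod int (map_prod int int))"

lemma int_exps_add: "int_exps (a + b) = int_exps a + int_exps b"
  by (cases a; cases b) (simp add: int_exps_def)

lemma int_exps_less_iff: "int_exps a < int_exps b \<longleftrightarrow> a < b"
  by (cases a; cases b) (auto simp: int_exps_def)

definition lead_exps_LR :: "lpoly \<Rightarrow> int \<times> int \<times> int \<times> int" where
  "lead_exps_LR x = int_exps (lead_exps (snd (cleared x))) - int_exps (lead_exps (KL ^ fst (cleared x)))"

definition lead_acoeff_LR :: "lpoly \<Rightarrow> apoly" where
  "lead_acoeff_LR x = lead_acoeff (snd (cleared x))"

lemma lead_LR_cleared:
  assumes "x \<in> LR" "x \<noteq> 0" "x * of_klpoly KL ^ N = of_klpoly X"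
  shows "lead_exps_LR x = int_exps (lead_exps X) - int_exps (lead_exps (KL ^ N))"
    "lead_acoeff_LR x = lead_acoeff X"
proof -
  obtain M Y where c: "cleared x = (M, Y)" by fastforce
  have eq: "X * KL ^ M = Y * KL ^ N" using cleared_unique[OF assms(3)] cleared[OF assms(1)] c by simp
  have "X \<noteq> 0" "Y \<noteq> 0" using assms(2,3) cleared[OF assms(1)] c by auto
  then have "int_exps (lead_exps X) + int_exps (lead_exps (KL ^ M))
      = int_exps (lead_exps Y) + int_exps (lead_exps (KL ^ N))"
    using arg_cong[OF eq, of lead_exps] by (simp add: lead_exps_mult int_exps_add[symmetric])
  then show "lead_exps_LR x = int_exps (lead_exps X) - int_exps (lead_exps (KL ^ N))"
    by (simp add: lead_exps_LR_def c algebra_simps)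
  show "lead_acoeff_LR x = lead_acoeff X"
    using arg_cong[OF eq, of lead_acoeff] by (simp add: lead_acoeff_mult lead_acoeff_KL_power lead_acoeff_LR_def c)
qed

lemma lead_LR_mult:
  assumes "x \<in> LR" "y \<in> LR" "x \<noteq> 0" "y \<noteq> 0"
  shows "lead_exps_LR (x * y) = lead_exps_LR x + lead_exps_LR y"
    "lead_acoeff_LR (x * y) = lead_acoeff_LR x * lead_acoeff_LR y"
proof -
  obtain N X where x: "x * of_klpoly KL ^ N = of_klpoly X" using LR_clear_denominator[OF assms(1)] .
  obtain M Y where y: "y * of_klpoly KL ^ M = of_klpoly Y" using LR_clear_denominator[OF assms(2)] .
  have xy: "(x * y) * of_klpoly KL ^ (N + M) = of_klpoly (X * Y)"
    by (simp add: power_add x[symmetric] y[symmetric] ac_simps)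
  have nz: "X \<noteq> 0" "Y \<noteq> 0" using x y assms(3,4) by auto
  note r = lead_LR_cleared[OF LR_mult[OF assms(1,2)] _ xy] and rx = lead_LR_cleared[OF assms(1,3) x]
    and ry = lead_LR_cleared[OF assms(2,4) y]
  show "lead_exps_LR (x * y) = lead_exps_LR x + lead_exps_LR y"
    using assms(3,4) by (simp add: r rx ry lead_exps_mult nz power_add int_exps_add)
  show "lead_acoeff_LR (x * y) = lead_acoeff_LR x * lead_acoeff_LR y"
    using assms(3,4) by (simp add: r rx ry lead_acoeff_mult)
qed

lemma lead_LR_add:
  assumes "x \<in> LR" "y \<in> LR" "x \<noteq> 0" "y \<noteq> 0" "lead_exps_LR y < lead_exps_LR x"
  shows "x + y \<noteq> 0" "lead_exps_LR (x + y) = lead_exps_LR x" "lead_acoeff_LR (x + y) = lead_acoeff_LR x"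
proof -
  obtain N X0 where x0: "x * of_klpoly KL ^ N = of_klpoly X0" using LR_clear_denominator[OF assms(1)] .
  obtain M Y0 where y0: "y * of_klpoly KL ^ M = of_klpoly Y0" using LR_clear_denominator[OF assms(2)] .
  define X where "X = X0 * KL ^ M"
  define Y where "Y = Y0 * KL ^ N"
  have x: "x * of_klpoly KL ^ (N + M) = of_klpoly X"
    by (simp add: X_def power_add x0[symmetric] ac_simps)
  have y: "y * of_klpoly KL ^ (N + M) = of_klpoly Y"
    by (simp add: Y_def power_add y0[symmetric] ac_simps)
  have xy: "(x + y) * of_klpoly KL ^ (N + M) = of_klpoly (X + Y)"
    by (simp add: x[symmetric] y[symmetric] algebra_simps)
  have nz: "X \<noteq> 0" "Y \<noteq> 0" using x y assms(3,4) by auto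
  note rx = lead_LR_cleared[OF assms(1,3) x] and ry = lead_LR_cleared[OF assms(2,4) y]
  have "lead_exps Y < lead_exps X" using assms(5) by (simp add: rx ry int_exps_less_iff)
  note l = lead_exps_add[OF nz this]
  show "x + y \<noteq> 0" using l(1) xy by (metis KL_power_nonzero mult_zero_left of_klpoly_eq_0_iff)
  note r = lead_LR_cleared[OF LR_add[OF assms(1,2)] \<open>x + y \<noteq> 0\<close> xy]
  show "lead_exps_LR (x + y) = lead_exps_LR x" "lead_acoeff_LR (x + y) = lead_acoeff_LR x"
    using r rx l by simp_all
qed

lemma lead_LR_of_apoly:
  assumes "c \<noteq> 0" shows "lead_exps_LR (of_apoly c) = 0" "lead_acoeff_LR (of_apoly c) = c"
  using lead_LR_cleared[of "of_apoly c" 0 "const_kl c"] assms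
  by (simp_all add: lead_exps_const_kl lead_acoeff_const_kl lead_exps_KL_power[of 0, simplified] int_exps_def
      zero_prod_def)

lemma mult_eq_monom_imp_monoms:
  fixes p q :: "'a::idom poly"
  assumes "p * q = monom c s" "c \<noteq> 0"
  shows "\<exists>j a b. p = monom a j \<and> q = monom b (s - j) \<and> j \<le> s \<and> a * b = c"
  using assms
proof (induction s arbitrary: p q)
  case 0
  then have nz: "p \<noteq> 0" "q \<noteq> 0" by auto
  have "degree (p * q) = 0" using 0 by (simp add: monom_0)
  then have "degree p = 0" "degree q = 0" using degree_mult_eq[OF nz] by auto
  then have pq: "p = monom (coeff p 0) 0" "q = monom (coeff q 0) 0"
    by (auto simp: monom_0 elim!: degree_eq_zeroE)
  have "coeff p 0 * coeff q 0 = c" using 0 coeff_mult_0[of p q] by (simp add: monom_0)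
  then show ?case using pq by (intro exI[of _ 0] exI[of _ "coeff p 0"] exI[of _ "coeff q 0"]) simp
next
  case (Suc s)
  have "coeff p 0 * coeff q 0 = 0" using Suc.prems coeff_mult_0[of p q] by (simp add: monom_Suc)
  then consider "coeff p 0 = 0" | "coeff q 0 = 0" by auto
  then show ?case
  proof cases
    case 1
    obtain p' where p: "p = pCons 0 p'" using 1 by (cases p) auto
    have "p' * q = monom c s" using Suc.prems(1) by (simp add: p monom_Suc)
    then obtain j a b where "p' = monom a j" "q = monom b (s - j)" "j \<le> s" "a * b = c"
      using Suc.IH Suc.prems(2) by blast
    then show ?thesis by (intro exI[of _ "Suc j"] exI[of _ a] exI[of _ b]) (simp add: p monom_Suc)
  next
    case 2
    obtain q' where q: "q = pCons 0 q'" using 2 by (cases q) auto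
    have "p * q' = monom c s" using Suc.prems(1) by (simp add: q monom_Suc)
    then obtain j a b where "p = monom a j" "q' = monom b (s - j)" "j \<le> s" "a * b = c"
      using Suc.IH Suc.prems(2) by blast
    moreover have "Suc s - j = Suc (s - j)" using \<open>j \<le> s\<close> by simp
    ultimately show ?thesis by (intro exI[of _ j] exI[of _ a] exI[of _ b]) (simp add: q monom_Suc)
  qed
qed

lemma dvd_const_kl_mult_KL_power:
  assumes "D * E = const_kl c0 * KL ^ s" "c0 \<noteq> 0"
  obtains c M where "D = const_kl c * M" "M dvd KL ^ s" "c dvd c0"
proof -
  have DE: "D * E = monom (monom (monom (monom c0 s) s) s) s"
    using assms(1) by (simp add: KL_eq_monom monom_power monom_0[symmetric] mult_monom)
  have nz: "monom (monom (monom c0 s) s) s \<noteq> 0" "monom (monom c0 s) s \<noteq> 0" "monom c0 s \<noteq> 0"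
    using assms(2) by simp_all
  obtain j4 d3 e3 where l4: "D = monom d3 j4" "j4 \<le> s" "d3 * e3 = monom (monom (monom c0 s) s) s"
    using mult_eq_monom_imp_monoms[OF DE nz(1)] by blast
  obtain j3 d2 e2 where l3: "d3 = monom d2 j3" "j3 \<le> s" "d2 * e2 = monom (monom c0 s) s"
    using mult_eq_monom_imp_monoms[OF l4(3) nz(2)] by blast
  obtain j2 d1 e1 where l2: "d2 = monom d1 j2" "j2 \<le> s" "d1 * e1 = monom c0 s"
    using mult_eq_monom_imp_monoms[OF l3(3) nz(3)] by blast
  obtain j1 c e where l1: "d1 = monom c j1" "j1 \<le> s" "c * e = c0"
    using mult_eq_monom_imp_monoms[OF l2(3) assms(2)] by blast
  define M :: klpoly where "M = monom (monom (monom (monom 1 j1) j2) j3) j4"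
  have "D = const_kl c * M" by (simp add: l4 l3 l2 l1 M_def monom_0[symmetric] mult_monom)
  moreover have "M * monom (monom (monom (monom 1 (s - j1)) (s - j2)) (s - j3)) (s - j4) = KL ^ s"
    using l4(2) l3(2) l2(2) l1(2) by (simp add: M_def mult_monom KL_eq_monom monom_power)
  then have "M dvd KL ^ s" by (metis dvd_triv_left)
  moreover have "c dvd c0" using l1(3) by (metis dvd_triv_left)
  ultimately show ?thesis using that by blast
qed

lemma common_divisor_with_of_apoly:
  assumes x: "x \<in> LR" "x \<noteq> 0" and d: "d \<in> LR" "dvd_in LR d x" "dvd_in LR d (of_apoly c0)"
    and c0: "c0 \<noteq> 0"
  obtains c u where "c dvd c0" "c dvd lead_acoeff_LR x" "unit_in LR u" "d = of_apoly c * u"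
proof -
  obtain a D where da: "d * of_klpoly KL ^ a = of_klpoly D" using LR_clear_denominator[OF d(1)] .
  have c0r: "of_apoly c0 * of_klpoly KL ^ 0 = of_klpoly (const_kl c0)" by simp
  obtain M where "D dvd const_kl c0 * KL ^ M"
    using d(3) dvd_in_iff_cleared[OF da c0r of_apoly_in_LR] by blast
  then obtain E where "D * E = const_kl c0 * KL ^ M" by (metis dvdE)
  then obtain c Mo where cM: "D = const_kl c * Mo" "Mo dvd KL ^ M" "c dvd c0"
    by (rule dvd_const_kl_mult_KL_power[OF _ c0])
  have u: "unit_in LR (of_klpoly Mo * KL_inv ^ a)"
    using cM(2) unit_in_of_klpoly_iff unit_in_mult unit_in_KL_inv_power by blast
  have deq: "d = of_apoly c * (of_klpoly Mo * KL_inv ^ a)"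
    using LR_eq_fraction[OF da] by (simp only: cM(1) of_klpoly_simps(4) of_klpoly_const_kl mult.assoc)
  obtain b X where xb: "x * of_klpoly KL ^ b = of_klpoly X" using LR_clear_denominator[OF x(1)] .
  obtain M' where "D dvd X * KL ^ M'" using d(2) dvd_in_iff_cleared[OF da xb x(1)] by blast
  then obtain F where "X * KL ^ M' = D * F" by (rule dvdE)
  then have "lead_acoeff (X * KL ^ M') = lead_acoeff (const_kl c * Mo * F)" by (simp only: cM(1))
  then have "lead_acoeff X = c * (lead_acoeff Mo * lead_acoeff F)"
    by (simp only: lead_acoeff_mult lead_acoeff_KL_power lead_acoeff_const_kl mult.assoc mult_1_right)
  then have "c dvd lead_acoeff_LR x" using lead_LR_cleared(2)[OF x xb] by simp
  then show ?thesis using that cM(3) u deq by blast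
qed

lemma unit_in_of_apoly: "is_unit c \<Longrightarrow> unit_in LR (of_apoly c)"
proof -
  assume "is_unit c"
  then obtain c' where "1 = c * c'" by (rule dvdE)
  then have "of_apoly c * of_apoly c' = 1" by (metis of_apoly_simps(2,4))
  then show ?thesis by (auto simp: unit_in_def)
qed

lemma coprime_in_of_apoly:
  assumes "x \<in> LR" "x \<noteq> 0" "c0 \<noteq> 0" "\<And>c. c dvd c0 \<Longrightarrow> c dvd lead_acoeff_LR x \<Longrightarrow> is_unit c"
  shows "coprime_in LR x (of_apoly c0)"
  unfolding coprime_in_def
proof (intro ballI impI)
  fix d assume "d \<in> LR" "dvd_in LR d x \<and> dvd_in LR d (of_apoly c0)"
  then obtain c u where "c dvd c0" "c dvd lead_acoeff_LR x" "unit_in LR u" "d = of_apoly c * u"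
    using common_divisor_with_of_apoly[OF assms(1,2)] assms(3) by blast
  then show "unit_in LR d" using assms(4) unit_in_of_apoly unit_in_mult by blast
qed

lemma coprime_in_of_apoly_prime:
  assumes "x \<in> LR" "x \<noteq> 0" "prime_elem p" "\<not> dvd_in LR (of_apoly p) x"
  shows "coprime_in LR x (of_apoly p)"
  unfolding coprime_in_def
proof (intro ballI impI)
  fix d assume d: "d \<in> LR" "dvd_in LR d x \<and> dvd_in LR d (of_apoly p)"
  have "p \<noteq> 0" using assms(3) by auto
  with d obtain c u where cu: "c dvd p" "unit_in LR u" "d = of_apoly c * u"
    using common_divisor_with_of_apoly[OF assms(1,2)] by metis
  obtain e where pce: "p = c * e" using cu(1) by (rule dvdE)
  from irreducibleD[OF prime_elem_imp_irreducible[OF assms(3)] pce] show "unit_in LR d"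
  proof
    assume "is_unit c" then show ?thesis using cu unit_in_of_apoly unit_in_mult by blast
  next
    assume "is_unit e"
    then obtain e' where e': "1 = e * e'" by (rule dvdE)
    have "c = p * e'" using pce e' by (metis mult.assoc mult.right_neutral)
    then have "d = of_apoly p * (of_apoly e' * u)" using cu(3) by (simp add: mult.assoc)
    moreover have "of_apoly e' * u \<in> LR" using cu(2) by (auto simp: unit_in_def intro: LR_mult)
    ultimately have "dvd_in LR (of_apoly p) d" by (rule dvd_inI[rotated])
    then show ?thesis using d(2) dvd_in_trans assms(4) by blast
  qed
qed

lemma prime_elem_A6: "prime_elem A6"
  unfolding A6_def by (rule prime_elem_linear_poly) simp_all

lemma prime_elem_A3: "prime_elem A3"
proof -
  have "prime_elem ([:0, 1:] :: int poly poly poly)" by (rule prime_elem_linear_poly) simp_all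
  then show ?thesis unfolding A3_def by (simp add: prime_elem_const_poly_iff)
qed

lemma prime_elem_A1: "prime_elem A1"
proof -
  have "prime_elem ([:0, 1:] :: int poly)" by (rule prime_elem_linear_poly) simp_all
  then show ?thesis unfolding A1_def by (simp add: prime_elem_const_poly_iff)
qed

definition quad_form :: "'a::comm_ring_1 \<Rightarrow> 'a \<Rightarrow> 'a \<Rightarrow> 'a \<Rightarrow> 'a \<Rightarrow> 'a" where
  "quad_form c1 c2 c3 x y = c1 * x ^ 2 + c2 * x * y + c3 * y ^ 2"

lemma quad_form_swap: "quad_form c1 c2 c3 x y = quad_form c3 c2 c1 y x"
  by (simp add: quad_form_def algebra_simps)

lemma quad_form_eq_mult_add: "quad_form c1 c2 c3 x y = c3 * y ^ 2 + x * (c1 * x + c2 * y)"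
  by (simp add: quad_form_def algebra_simps power2_eq_square)

lemma quad_form_homogeneous: "quad_form c1 c2 c3 x y * z ^ 2 = quad_form c1 c2 c3 (x * z) (y * z)"
  by (simp add: quad_form_def algebra_simps power2_eq_square)

lemma quad_form_shift:
  "quad_form c1 c2 c3 (u + k * s) (v + k * t) = quad_form c1 c2 c3 u v
     + k * (c1 * (2 * u * s + k * s ^ 2) + c2 * (u * t + v * s + k * s * t) + c3 * (2 * v * t + k * t ^ 2))"
  by (simp add: quad_form_def algebra_simps power2_eq_square)

lemma quad_form_pos:
  fixes x y c1 c2 c3 :: int
  assumes "0 < x" "0 < y" "0 \<le> c1" "0 \<le> c2" "0 \<le> c3" "0 < c1 \<or> 0 < c2 \<or> 0 < c3"
  shows "0 < quad_form c1 c2 c3 x y"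
proof -
  have "0 \<le> c1 * x ^ 2" "0 \<le> c2 * x * y" "0 \<le> c3 * y ^ 2" using assms by simp_all
  moreover have "0 < c1 * x ^ 2 \<or> 0 < c2 * x * y \<or> 0 < c3 * y ^ 2" using assms by auto
  ultimately show ?thesis unfolding quad_form_def by linarith
qed

lemma quad_form_in_LR: "c1 \<in> LR \<Longrightarrow> c2 \<in> LR \<Longrightarrow> c3 \<in> LR \<Longrightarrow> x \<in> LR \<Longrightarrow> y \<in> LR \<Longrightarrow> quad_form c1 c2 c3 x y \<in> LR"
  by (simp add: quad_form_def LR_add LR_mult LR_power)

lemma eval_LR_quad_form:
  assumes "x \<in> LR" "y \<in> LR"
  shows "eval_LR pt (quad_form (of_apoly c1) (of_apoly c2) (of_apoly c3) x y)
    = quad_form (eval_apoly pt c1) (eval_apoly pt c2) (eval_apoly pt c3) (eval_LR pt x) (eval_LR pt y)"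
  using assms by (simp add: quad_form_def power2_eq_square eval_LR_add eval_LR_mult LR_mult LR_add)

lemma lead_LR_quad_form:
  assumes xy: "x \<in> LR" "y \<in> LR" "x \<noteq> 0" "y \<noteq> 0" and c: "c1 \<noteq> 0" "c2 \<noteq> 0" "c3 \<noteq> 0"
    and lt: "lead_exps_LR y < lead_exps_LR x"
  defines "Q \<equiv> quad_form (of_apoly c1) (of_apoly c2) (of_apoly c3) x y"
  shows "Q \<noteq> 0" "lead_exps_LR Q = lead_exps_LR x + lead_exps_LR x"
    "lead_acoeff_LR Q = c1 * lead_acoeff_LR x ^ 2"
proof -
  note mult = lead_LR_mult[OF LR_mult LR_mult] lead_LR_mult lead_LR_of_apoly
  define T1 where "T1 = of_apoly c1 * (x * x)"
  define T2 where "T2 = (of_apoly c2 * x) * y"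
  define T3 where "T3 = of_apoly c3 * (y * y)"
  have T1: "T1 \<in> LR" "T1 \<noteq> 0" "lead_exps_LR T1 = lead_exps_LR x + lead_exps_LR x"
    "lead_acoeff_LR T1 = c1 * lead_acoeff_LR x ^ 2"
    using xy c by (simp_all add: T1_def LR_mult lead_LR_mult lead_LR_of_apoly power2_eq_square)
  have T2: "T2 \<in> LR" "T2 \<noteq> 0" "lead_exps_LR T2 = lead_exps_LR x + lead_exps_LR y"
    using xy c by (simp_all add: T2_def LR_mult lead_LR_mult lead_LR_of_apoly)
  have T3: "T3 \<in> LR" "T3 \<noteq> 0" "lead_exps_LR T3 = lead_exps_LR y + lead_exps_LR y"
    using xy c by (simp_all add: T3_def LR_mult lead_LR_mult lead_LR_of_apoly)
  have "lead_exps_LR T3 < lead_exps_LR T2" using T2(3) T3(3) lt by simp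
  note S = lead_LR_add[OF T2(1) T3(1) T2(2) T3(2) this]
  have "lead_exps_LR (T2 + T3) < lead_exps_LR T1" using S(2) T1(3) T2(3) lt by simp
  note F = lead_LR_add[OF T1(1) LR_add[OF T2(1) T3(1)] T1(2) S(1) this]
  have "Q = T1 + (T2 + T3)" by (simp add: Q_def quad_form_def T1_def T2_def T3_def power2_eq_square add.assoc)
  then show "Q \<noteq> 0" "lead_exps_LR Q = lead_exps_LR x + lead_exps_LR x"
    "lead_acoeff_LR Q = c1 * lead_acoeff_LR x ^ 2"
    using F T1 by simp_all
qed

section \<open>The resultant\<close>

text \<open>\<open>Res\<close> is the resultant of the two quadratic forms \<open>a\<^sub>3x\<^sup>2 + a\<^sub>5xy + a\<^sub>6y\<^sup>2\<close> and
  \<open>a\<^sub>1x\<^sup>2 + a\<^sub>2xy + a\<^sub>3y\<^sup>2\<close>.\<close>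

definition Res :: apoly where
  "Res = (A1 * A6 - A3 ^ 2) ^ 2 + (A1 * A5 - A2 * A3) * (A3 * A5 - A2 * A6)"

definition A136 :: apoly where "A136 = A1 * A3 * A6"

lemma not_dvd_if_eval_apoly: "eval_apoly pt a = 0 \<Longrightarrow> eval_apoly pt b \<noteq> 0 \<Longrightarrow> \<not> a dvd b"
  by (metis dvd_0_left_iff dvd_def eval_apoly_simps(4))

lemma eval_apoly_Res:
  "eval_apoly (b1, b2, b3, b5, b6) Res = (b1 * b6 - b3 ^ 2) ^ 2 + (b1 * b5 - b2 * b3) * (b3 * b5 - b2 * b6)"
  by (simp add: Res_def eval_apoly_vars)

lemma coprime_Res_A136: "coprime Res A136"
proof -
  have "\<not> A6 dvd Res" by (rule not_dvd_if_eval_apoly[of "(1, 1, 1, 1, 0)"]) (simp_all add: eval_apoly_vars eval_apoly_Res)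
  moreover have "\<not> A3 dvd Res" by (rule not_dvd_if_eval_apoly[of "(1, 0, 0, 1, 1)"]) (simp_all add: eval_apoly_vars eval_apoly_Res)
  moreover have "\<not> A1 dvd Res" by (rule not_dvd_if_eval_apoly[of "(0, 1, 1, 1, 1)"]) (simp_all add: eval_apoly_vars eval_apoly_Res)
  ultimately have "coprime A6 Res" "coprime A3 Res" "coprime A1 Res"
    using prime_elem_imp_coprime prime_elem_A6 prime_elem_A3 prime_elem_A1 by blast+
  then show ?thesis unfolding A136_def by (simp add: coprime_commute)
qed

lemma Res_nonzero: "Res \<noteq> 0"
proof
  assume "Res = 0"
  then show False using eval_apoly_Res[of 1 1 1 1 0] by simp
qed

lemma coprime_in_Res:
  assumes "x \<in> LR" "x \<noteq> 0" "lead_acoeff_LR x dvd A136 ^ N"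
  shows "coprime_in LR x (of_apoly Res)"
proof (rule coprime_in_of_apoly[OF assms(1,2) Res_nonzero])
  fix c assume "c dvd Res" "c dvd lead_acoeff_LR x"
  then have "c dvd A136 ^ N" using assms(3) dvd_trans by blast
  moreover have "coprime Res (A136 ^ N)" using coprime_Res_A136 by simp
  ultimately show "is_unit c" using \<open>c dvd Res\<close> coprime_common_divisor by blast
qed

text \<open>At each test point one of \<open>a\<^sub>1, a\<^sub>3, a\<^sub>6\<close> vanishes, while both quadratic forms of the
  recurrence stay positive on positive arguments.\<close>

definition test_points :: "point set" where
  "test_points = {(1, 1, 1, 1, 0), (1, 0, 0, 1, 1), (0, 1, 1, 1, 1)}"

definition admissible :: "lpoly \<Rightarrow> bool" where
  "admissible x \<longleftrightarrow> x \<in> LR \<and> (\<forall>pt\<in>test_points. 0 < eval_LR pt x) \<and> (\<exists>N. lead_acoeff_LR x dvd A136 ^ N)"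

lemma eval_LR_0 [simp]: "eval_LR pt 0 = 0"
  using eval_LR_cleared[of 0 0 0] by simp

lemma admissible_nonzero: "admissible x \<Longrightarrow> x \<noteq> 0"
  by (auto simp: admissible_def test_points_def)

lemma admissible_not_dvd_in:
  assumes "admissible x"
  shows "\<not> dvd_in LR a1 x" "\<not> dvd_in LR a3 x" "\<not> dvd_in LR a6 x"
proof -
  have x: "x \<in> LR" and pos: "\<forall>pt\<in>test_points. 0 < eval_LR pt x" using assms by (auto simp: admissible_def)
  show "\<not> dvd_in LR a1 x" "\<not> dvd_in LR a3 x" "\<not> dvd_in LR a6 x"
    using eval_LR_eq_0_if_dvd_in[OF x, of A1 "(0, 1, 1, 1, 1)"] eval_LR_eq_0_if_dvd_in[OF x, of A3 "(1, 0, 0, 1, 1)"]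
      eval_LR_eq_0_if_dvd_in[OF x, of A6 "(1, 1, 1, 1, 0)"] pos
    by (auto simp: of_apoly_vars eval_apoly_vars test_points_def)
qed

lemma admissible_coprime_in_coeffs:
  assumes "admissible x"
  shows "coprime_in LR x a1" "coprime_in LR x a3" "coprime_in LR x a6"
proof -
  have x: "x \<in> LR" "x \<noteq> 0" using assms admissible_nonzero by (auto simp: admissible_def)
  show "coprime_in LR x a1" "coprime_in LR x a3" "coprime_in LR x a6"
    using coprime_in_of_apoly_prime[OF x prime_elem_A1] coprime_in_of_apoly_prime[OF x prime_elem_A3]
      coprime_in_of_apoly_prime[OF x prime_elem_A6] admissible_not_dvd_in[OF assms]
    by (simp_all add: of_apoly_vars)
qed

lemma admissible_of_klpoly:
  assumes "\<And>pt. eval_klpoly pt X = 1" "lead_acoeff X = 1"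
  shows "admissible (of_klpoly X)" "lead_exps_LR (of_klpoly X) = int_exps (lead_exps X)"
proof -
  have r: "of_klpoly X * of_klpoly KL ^ 0 = of_klpoly X" by simp
  have nz: "of_klpoly X \<noteq> 0" using assms(2) by (auto simp: lead_acoeff_def)
  show "admissible (of_klpoly X)"
    using eval_LR_cleared[OF _ r] lead_LR_cleared(2)[OF _ nz r] assms by (auto simp: admissible_def)
  show "lead_exps_LR (of_klpoly X) = int_exps (lead_exps X)"
    using lead_LR_cleared(1)[OF _ nz r] by (simp add: lead_exps_KL_power[of 0, simplified] int_exps_def zero_prod_def)
qed

lemma mult_square_dvd_power:
  fixes a c x :: "'a::comm_semiring_1"
  shows "c dvd a \<Longrightarrow> x dvd a ^ N \<Longrightarrow> c * x ^ 2 dvd a ^ Suc (N * 2)"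
proof -
  assume c: "c dvd a" and x: "x dvd a ^ N"
  have "c * x ^ 2 dvd a * (a ^ N) ^ 2" by (rule mult_dvd_mono[OF c dvd_power_same[OF x]])
  also have "a * (a ^ N) ^ 2 = a ^ Suc (N * 2)" by (simp add: power_mult)
  finally show ?thesis .
qed

lemma lead_LR_quad_form_admissible:
  assumes k: "admissible k" and l: "admissible l" and ne: "lead_exps_LR k \<noteq> lead_exps_LR l"
    and c: "c1 \<noteq> 0" "c2 \<noteq> 0" "c3 \<noteq> 0" "c1 dvd A136" "c3 dvd A136"
  defines "Q \<equiv> quad_form (of_apoly c1) (of_apoly c2) (of_apoly c3) k l"
  shows "Q \<noteq> 0 \<and> lead_exps_LR Q = max (lead_exps_LR k) (lead_exps_LR l) + max (lead_exps_LR k) (lead_exps_LR l)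
      \<and> (\<exists>N. lead_acoeff_LR Q dvd A136 ^ N)"
proof -
  have kLR: "k \<in> LR" "k \<noteq> 0" and lLR: "l \<in> LR" "l \<noteq> 0"
    using k l admissible_nonzero by (auto simp: admissible_def)
  obtain N1 N2 where lc: "lead_acoeff_LR k dvd A136 ^ N1" "lead_acoeff_LR l dvd A136 ^ N2"
    using k l by (auto simp: admissible_def)
  show ?thesis
  proof (cases "lead_exps_LR l < lead_exps_LR k")
    case True
    then show ?thesis
      using lead_LR_quad_form[OF kLR(1) lLR(1) kLR(2) lLR(2) c(1-3) True] mult_square_dvd_power[OF c(4) lc(1)]
      unfolding Q_def by (auto intro!: exI[of _ "Suc (N1 * 2)"])
  next
    case False
    then have "lead_exps_LR k < lead_exps_LR l" using ne by (meson linorder_neqE)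
    then show ?thesis
      using lead_LR_quad_form[OF lLR(1) kLR(1) lLR(2) kLR(2) c(3,2,1)] mult_square_dvd_power[OF c(5) lc(2)]
      unfolding Q_def quad_form_swap[of _ _ _ k l] by (auto intro!: exI[of _ "Suc (N2 * 2)"])
  qed
qed

lemma admissible_quotient:
  assumes k: "admissible k" and l: "admissible l" and kp: "admissible kp"
    and ne: "lead_exps_LR k \<noteq> lead_exps_LR l"
    and q: "q \<in> LR" "q * kp = quad_form (of_apoly c1) (of_apoly c2) (of_apoly c3) k l"
    and c: "c1 \<noteq> 0" "c2 \<noteq> 0" "c3 \<noteq> 0" "c1 dvd A136" "c3 dvd A136"
    and pos: "\<And>pt x y. pt \<in> test_points \<Longrightarrow> 0 < x \<Longrightarrow> 0 < y \<Longrightarrow>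
                0 < quad_form (eval_apoly pt c1) (eval_apoly pt c2) (eval_apoly pt c3) x y"
  shows "admissible q"
    "lead_exps_LR q + lead_exps_LR kp = max (lead_exps_LR k) (lead_exps_LR l) + max (lead_exps_LR k) (lead_exps_LR l)"
proof -
  define Q where "Q = quad_form (of_apoly c1) (of_apoly c2) (of_apoly c3) k l"
  note lead = lead_LR_quad_form_admissible[OF k l ne c, folded Q_def]
  have kLR: "k \<in> LR" "l \<in> LR" and kpLR: "kp \<in> LR" "kp \<noteq> 0"
    using k l kp admissible_nonzero by (auto simp: admissible_def)
  have qnz: "q \<noteq> 0" using lead q(2) by (auto simp: Q_def)
  note qkp = lead_LR_mult[OF q(1) kpLR(1) qnz kpLR(2)]
  show "lead_exps_LR q + lead_exps_LR kp = max (lead_exps_LR k) (lead_exps_LR l) + max (lead_exps_LR k) (lead_exps_LR l)"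
    using lead qkp(1) q(2) by (simp add: Q_def)
  have "\<exists>N. lead_acoeff_LR q dvd A136 ^ N"
    using lead qkp(2) q(2) by (auto simp: Q_def intro: dvd_mult_left)
  moreover have "0 < eval_LR pt q" if "pt \<in> test_points" for pt
  proof -
    have "0 < eval_LR pt Q" "0 < eval_LR pt kp"
      using pos[OF that] k l kp that eval_LR_quad_form[OF kLR] by (auto simp: Q_def admissible_def)
    moreover have "eval_LR pt q * eval_LR pt kp = eval_LR pt Q"
      using eval_LR_mult[OF q(1) kpLR(1)] q(2) by (simp add: Q_def)
    ultimately show ?thesis using zero_less_mult_pos2[of "eval_LR pt q" "eval_LR pt kp"] by (simp only:)
  qed
  ultimately show "admissible q" using q(1) by (simp add: admissible_def)
qed

lemma quad_forms_pos:
  assumes "pt \<in> test_points" "0 < x" "0 < y"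
  shows "0 < quad_form (eval_apoly pt A3) (eval_apoly pt A5) (eval_apoly pt A6) x y"
    "0 < quad_form (eval_apoly pt A1) (eval_apoly pt A2) (eval_apoly pt A3) x y"
  using assms by (auto simp: test_points_def eval_apoly_vars intro!: quad_form_pos)

lemma coprime_in_quotient:
  assumes LR: "k \<in> LR" "l \<in> LR" "kp \<in> LR" "c1 \<in> LR" "c2 \<in> LR" "c3 \<in> LR"
    and rel: "kn * kp = quad_form c1 c2 c3 k l"
    and cop: "coprime_in LR k l" "coprime_in LR k c3"
  shows "coprime_in LR k kn"
  unfolding coprime_in_def
proof (intro ballI impI)
  fix d assume d: "d \<in> LR" "dvd_in LR d k \<and> dvd_in LR d kn"
  have "dvd_in LR d (quad_form c1 c2 c3 k l)" using dvd_in_mult_right[OF LR(3)] d(2) rel by metis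
  moreover have "dvd_in LR d (k * (c1 * k + c2 * l))" using d(2) LR by (simp add: dvd_in_mult_right LR_add LR_mult)
  ultimately have "dvd_in LR d (c3 * l ^ 2)" using dvd_in_diff by (fastforce simp: quad_form_eq_mult_add)
  moreover have "coprime_in LR d (l ^ 2)" using coprime_in_power[OF d(1) LR(2)] coprime_in_dvd_in[OF d(1) _ cop(1)] d(2)
    by blast
  ultimately have "dvd_in LR d c3" using coprime_in_dvd_in_mult'[OF d(1) LR_power[OF LR(2)] LR(6)] by blast
  moreover have "coprime_in LR d c3" using coprime_in_dvd_in[OF d(1) _ cop(2)] d(2) by blast
  ultimately show "unit_in LR d" using d(1) dvd_in_refl by (auto simp: coprime_in_def)
qed

lemma resultant_identities:
  fixes b1 b2 b3 b5 b6 k l :: "'a::comm_ring_1"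
  assumes "E1 = (b1 * b5 - b2 * b3) * k + (b1 * b6 - b3 ^ 2) * l"
    and "E2 = (b3 ^ 2 - b1 * b6) * k + (b3 * b5 - b2 * b6) * l"
  shows "b1 * quad_form b3 b5 b6 k l - b3 * quad_form b1 b2 b3 k l = E1 * l"
    "b3 * quad_form b3 b5 b6 k l - b6 * quad_form b1 b2 b3 k l = E2 * k"
    "(b1 * b5 - b2 * b3) * E2 - (b3 ^ 2 - b1 * b6) * E1
       = ((b1 * b6 - b3 ^ 2) ^ 2 + (b1 * b5 - b2 * b3) * (b3 * b5 - b2 * b6)) * l"
  unfolding assms quad_form_def by (simp_all add: algebra_simps power2_eq_square)

text \<open>Eliminating \<open>k\<close> and \<open>l\<close> from the two quadratic forms shows that a common divisor of the two new
  terms divides the resultant.\<close>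

lemma coprime_in_quotients:
  assumes LR: "k \<in> LR" "l \<in> LR" "kp \<in> LR" "lp \<in> LR" "kn \<in> LR" "lq \<in> LR"
    and rel: "kn * kp = quad_form a3 a5 a6 k l" "lq * lp = quad_form a1 a2 a3 k l"
    and cop: "coprime_in LR k kn" "coprime_in LR l kn" "coprime_in LR kn (of_apoly Res)"
  shows "coprime_in LR kn lq"
  unfolding coprime_in_def
proof (intro ballI impI)
  fix d assume d: "d \<in> LR" "dvd_in LR d kn \<and> dvd_in LR d lq"
  have dk: "coprime_in LR d k" and dl: "coprime_in LR d l"
    using coprime_in_dvd_in[OF d(1) _ coprime_in_commute] cop(1,2) d(2) by blast+
  have A: "dvd_in LR d (quad_form a3 a5 a6 k l)" and B: "dvd_in LR d (quad_form a1 a2 a3 k l)"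
    using dvd_in_mult_right[OF LR(3)] dvd_in_mult_right[OF LR(4)] d(2) rel by metis+
  define E1 where "E1 = (a1 * a5 - a2 * a3) * k + (a1 * a6 - a3 ^ 2) * l"
  define E2 where "E2 = (a3 ^ 2 - a1 * a6) * k + (a3 * a5 - a2 * a6) * l"
  note ids = resultant_identities[OF E1_def E2_def]
  have E: "E1 \<in> LR" "E2 \<in> LR" "a1 * a5 - a2 * a3 \<in> LR" "a3 ^ 2 - a1 * a6 \<in> LR"
    using LR by (simp_all add: E1_def E2_def LR_add LR_diff LR_mult LR_power)
  have "dvd_in LR d (E1 * l)"
    using dvd_in_diff[OF dvd_in_mult_left[OF coeffs_in_LR(1) A] dvd_in_mult_left[OF coeffs_in_LR(3) B]] ids(1)
    by simp
  then have e1: "dvd_in LR d E1" using coprime_in_dvd_in_mult'[OF d(1) LR(2) E(1) dl] by blast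
  have "dvd_in LR d (E2 * k)"
    using dvd_in_diff[OF dvd_in_mult_left[OF coeffs_in_LR(3) A] dvd_in_mult_left[OF coeffs_in_LR(5) B]] ids(2)
    by simp
  then have e2: "dvd_in LR d E2" using coprime_in_dvd_in_mult'[OF d(1) LR(1) E(2) dk] by blast
  have "dvd_in LR d (of_apoly Res * l)"
    using dvd_in_diff[OF dvd_in_mult_left[OF E(3) e2] dvd_in_mult_left[OF E(4) e1]] ids(3)
    by (simp add: Res_def of_apoly_vars)
  then have "dvd_in LR d (of_apoly Res)" using coprime_in_dvd_in_mult'[OF d(1) LR(2) of_apoly_in_LR dl] by blast
  moreover have "coprime_in LR d (of_apoly Res)" using coprime_in_dvd_in[OF d(1) _ cop(3)] d(2) by blast
  ultimately show "unit_in LR d" using d(1) dvd_in_refl by (auto simp: coprime_in_def)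
qed

text \<open>The Laurent step: modulo \<open>k\<close>, the previous relations reduce \<open>k\<^sub>m K\<^sub>p\<close> and \<open>l\<^sub>m L\<^sub>p\<close> to
  \<open>c\<^sub>3 l\<^sup>2\<close> and \<open>c\<^sub>1 l\<^sup>2\<close>, and the form evaluated there is a multiple of the form at \<open>(K\<^sub>p, L\<^sub>p)\<close>,
  which \<open>k\<close> divides.\<close>

lemma dvd_in_quad_form_next:
  assumes LR: "k \<in> LR" "l \<in> LR" "Kp \<in> LR" "Lp \<in> LR" "km \<in> LR" "lm \<in> LR" "kpp \<in> LR"
    and cLR: "c1 \<in> LR" "c2 \<in> LR" "c3 \<in> LR" "d1 \<in> LR" "d2 \<in> LR"
    and rel: "km * Kp = quad_form c1 c2 c3 k l" "lm * Lp = quad_form d1 d2 c1 k l"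
      "k * kpp = quad_form c1 c2 c3 Kp Lp"
    and cop: "coprime_in LR k Kp" "coprime_in LR k Lp"
  shows "dvd_in LR k (quad_form c1 c2 c3 km lm)"
proof -
  define s where "s = (c1 * k + c2 * l) * Lp"
  define t where "t = (d1 * k + d2 * l) * Kp"
  define u where "u = c3 * l ^ 2 * Lp"
  define v where "v = c1 * l ^ 2 * Kp"
  define W where "W = c1 * (2 * u * s + k * s ^ 2) + c2 * (u * t + v * s + k * s * t) + c3 * (2 * v * t + k * t ^ 2)"
  have "km * (Kp * Lp) = quad_form c1 c2 c3 k l * Lp" by (simp add: rel(1)[symmetric] ac_simps)
  also have "\<dots> = u + k * s" by (simp add: u_def s_def quad_form_eq_mult_add algebra_simps)
  finally have e1: "km * (Kp * Lp) = u + k * s" .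
  have "lm * (Kp * Lp) = quad_form d1 d2 c1 k l * Kp" by (simp add: rel(2)[symmetric] ac_simps)
  also have "\<dots> = v + k * t" by (simp add: v_def t_def quad_form_eq_mult_add algebra_simps)
  finally have e2: "lm * (Kp * Lp) = v + k * t" .
  have "quad_form c1 c2 c3 km lm * (Kp * Lp) ^ 2 = quad_form c1 c2 c3 (u + k * s) (v + k * t)"
    by (simp only: quad_form_homogeneous e1 e2)
  also have "\<dots> = quad_form c1 c2 c3 u v + k * W" by (simp only: quad_form_shift W_def)
  also have "quad_form c1 c2 c3 u v = c1 * c3 * l ^ 4 * (k * kpp)"
    by (simp add: rel(3) u_def v_def quad_form_def algebra_simps power2_eq_square power4_eq_xxxx)
  finally have "quad_form c1 c2 c3 km lm * (Kp * Lp) ^ 2 = k * (c1 * c3 * l ^ 4 * kpp + W)"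
    by (simp add: algebra_simps)
  moreover have "c1 * c3 * l ^ 4 * kpp + W \<in> LR"
    using LR cLR by (simp add: W_def s_def t_def u_def v_def LR_add LR_mult LR_power)
  ultimately have "dvd_in LR k (quad_form c1 c2 c3 km lm * (Kp * Lp) ^ 2)" by (simp add: dvd_in_mult_self)
  moreover have "coprime_in LR k ((Kp * Lp) ^ 2)"
    using LR cop by (simp add: coprime_in_power coprime_in_mult LR_mult)
  ultimately show ?thesis
    using coprime_in_dvd_in_mult'[OF LR(1) LR_power[OF LR_mult[OF LR(3,4)]] quad_form_in_LR[OF cLR(1-3) LR(5,6)]]
    by blast
qed

lemma emb_eq_iff [simp]: "emb p = emb q \<longleftrightarrow> p = q"
  by (simp add: eq_fract)

lemma emb_eq_0_iff [simp]: "emb p = 0 \<longleftrightarrow> p = 0"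
  by (simp add: eq_fract Zero_fract_def)

lemma emb_add: "emb (p + q) = emb p + emb q" and emb_mult: "emb (p * q) = emb p * emb q"
  by (simp_all add: add_fract mult_fract)

lemma emb_quad_form: "emb (quad_form c1 c2 c3 x y) = quad_form (emb c1) (emb c2) (emb c3) (emb x) (emb y)"
  unfolding quad_form_def power2_eq_square by (simp only: emb_add emb_mult)

lemma state_eq: "state n = (kseq n, lseq n, kseq (Suc n), lseq (Suc n))"
  by (cases "state n") (simp add: kseq_def lseq_def)

lemma kseq_lseq_initial: "kseq 0 = emb k0" "lseq 0 = emb l0" "kseq (Suc 0) = emb k1" "lseq (Suc 0) = emb l1"
  by (simp_all add: kseq_def lseq_def)

lemma kseq_lseq_Suc_Suc:
  "kseq (Suc (Suc n)) = quad_form (emb a3) (emb a5) (emb a6) (kseq (Suc n)) (lseq (Suc n)) / kseq n"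
  "lseq (Suc (Suc n)) = quad_form (emb a1) (emb a2) (emb a3) (kseq (Suc n)) (lseq (Suc n)) / lseq n"
  using arg_cong[OF state_eq[of "Suc n"], of "\<lambda>s. fst (snd (snd s))"]
    arg_cong[OF state_eq[of "Suc n"], of "\<lambda>s. snd (snd (snd s))"]
  by (simp_all add: state_eq[of n] quad_form_def mult.assoc)

definition to_LR :: "lpoly fract \<Rightarrow> lpoly" where
  "to_LR = the_inv_into LR emb"

lemma inj_on_emb: "inj_on (\<lambda>p. emb p) LR"
  by (simp add: inj_on_def)

lemma to_LR: "y \<in> emb ` LR \<Longrightarrow> to_LR y \<in> LR \<and> emb (to_LR y) = y"
  unfolding to_LR_def using the_inv_into_into[OF inj_on_emb] f_the_inv_into_f[OF inj_on_emb] by blast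

lemma to_LR_emb: "p \<in> LR \<Longrightarrow> to_LR (emb p) = p"
  unfolding to_LR_def by (rule the_inv_into_f_f[OF inj_on_emb])

abbreviation kk :: "nat \<Rightarrow> lpoly" where "kk n \<equiv> to_LR (kseq n)"
abbreviation ll :: "nat \<Rightarrow> lpoly" where "ll n \<equiv> to_LR (lseq n)"

definition admissible_at :: "nat \<Rightarrow> bool" where
  "admissible_at j \<longleftrightarrow> kseq j \<in> emb ` LR \<and> lseq j \<in> emb ` LR \<and> admissible (kk j) \<and> admissible (ll j)
     \<and> lead_exps_LR (kk j) \<noteq> lead_exps_LR (ll j)"

definition coprime_at :: "nat \<Rightarrow> bool" where
  "coprime_at j \<longleftrightarrow> coprime_in LR (kk j) (ll j) \<and> coprime_in LR (kk j) (kk (Suc j))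
     \<and> coprime_in LR (kk j) (ll (Suc j)) \<and> coprime_in LR (ll j) (kk (Suc j))
     \<and> coprime_in LR (ll j) (ll (Suc j)) \<and> coprime_in LR (kk (Suc j)) (ll (Suc j))"

lemma admissible_atD:
  assumes "admissible_at j"
  shows "kk j \<in> LR" "ll j \<in> LR" "emb (kk j) = kseq j" "emb (ll j) = lseq j"
    "admissible (kk j)" "admissible (ll j)" "kk j \<noteq> 0" "ll j \<noteq> 0"
    "lead_exps_LR (kk j) \<noteq> lead_exps_LR (ll j)"
  using assms to_LR[of "kseq j"] to_LR[of "lseq j"] admissible_nonzero by (auto simp: admissible_at_def)

lemma recurrence_in_LR:
  assumes "admissible_at j" "admissible_at (Suc j)" "admissible_at (Suc (Suc j))"
  shows "kk (Suc (Suc j)) * kk j = quad_form a3 a5 a6 (kk (Suc j)) (ll (Suc j))"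
    "ll (Suc (Suc j)) * ll j = quad_form a1 a2 a3 (kk (Suc j)) (ll (Suc j))"
proof -
  note g0 = admissible_atD[OF assms(1)] and g1 = admissible_atD[OF assms(2)]
    and g2 = admissible_atD[OF assms(3)]
  have "kseq j \<noteq> 0" "lseq j \<noteq> 0" using g0(3,4,7,8) emb_eq_0_iff by metis+
  then have "kseq (Suc (Suc j)) * kseq j = quad_form (emb a3) (emb a5) (emb a6) (kseq (Suc j)) (lseq (Suc j))"
    "lseq (Suc (Suc j)) * lseq j = quad_form (emb a1) (emb a2) (emb a3) (kseq (Suc j)) (lseq (Suc j))"
    using kseq_lseq_Suc_Suc[of j] by simp_all
  then have "emb (kk (Suc (Suc j)) * kk j) = emb (quad_form a3 a5 a6 (kk (Suc j)) (ll (Suc j)))"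
    "emb (ll (Suc (Suc j)) * ll j) = emb (quad_form a1 a2 a3 (kk (Suc j)) (ll (Suc j)))"
    by (simp_all only: emb_quad_form emb_mult g0(3,4) g1(3,4) g2(3,4))
  then show "kk (Suc (Suc j)) * kk j = quad_form a3 a5 a6 (kk (Suc j)) (ll (Suc j))"
    "ll (Suc (Suc j)) * ll j = quad_form a1 a2 a3 (kk (Suc j)) (ll (Suc j))"
    by (simp_all only: emb_eq_iff)
qed

lemma initial_values: "kk 0 = k0" "ll 0 = l0" "kk (Suc 0) = k1" "ll (Suc 0) = l1"
  by (simp_all add: kseq_lseq_initial to_LR_emb flip: of_klpoly_vars)

lemma unit_in_initial_values: "unit_in LR (kk 0)" "unit_in LR (ll 0)" "unit_in LR (kk (Suc 0))" "unit_in LR (ll (Suc 0))"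
  using unit_in_of_klpoly_iff[of K0] unit_in_of_klpoly_iff[of L0] unit_in_of_klpoly_iff[of K1] unit_in_of_klpoly_iff[of L1]
  by (auto simp: initial_values KL_def simp flip: of_klpoly_vars intro: exI[of _ 1])

lemma invariant_initial: "admissible_at 0" "admissible_at (Suc 0)" "coprime_at 0"
proof -
  have lead: "lead_acoeff K0 = 1" "lead_acoeff K1 = 1" "lead_acoeff L0 = 1" "lead_acoeff L1 = 1"
    "lead_exps K0 = (0, 0, 0, 1)" "lead_exps K1 = (0, 0, 1, 0)" "lead_exps L0 = (0, 1, 0, 0)" "lead_exps L1 = (1, 0, 0, 0)"
    by (simp_all add: lead_acoeff_def lead_exps_def K0_def K1_def L0_def L1_def)
  note vars = admissible_of_klpoly[of K0] admissible_of_klpoly[of K1] admissible_of_klpoly[of L0]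
    admissible_of_klpoly[of L1]
  have "kseq 0 \<in> emb ` LR" "kseq (Suc 0) \<in> emb ` LR" "lseq 0 \<in> emb ` LR" "lseq (Suc 0) \<in> emb ` LR"
    by (simp_all add: kseq_lseq_initial flip: of_klpoly_vars)
  then show "admissible_at 0" "admissible_at (Suc 0)"
    using vars lead eval_klpoly_vars
    by (simp_all add: admissible_at_def initial_values int_exps_def flip: of_klpoly_vars)
  show "coprime_at 0"
    using unit_in_initial_values by (simp add: coprime_at_def coprime_in_unit)
qed

lemma A_nonzero: "A1 \<noteq> 0" "A2 \<noteq> 0" "A3 \<noteq> 0" "A5 \<noteq> 0" "A6 \<noteq> 0"
  by (simp_all add: A1_def A2_def A3_def A5_def A6_def)

lemma laurent_step:
  assumes adm: "\<And>j. j \<le> Suc n \<Longrightarrow> admissible_at j" and cop: "\<And>j. j \<le> n \<Longrightarrow> coprime_at j"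
  shows "dvd_in LR (kk n) (quad_form a3 a5 a6 (kk (Suc n)) (ll (Suc n)))
    \<and> dvd_in LR (ll n) (quad_form a1 a2 a3 (kk (Suc n)) (ll (Suc n)))"
proof -
  consider "n \<le> 1" | p where "n = Suc (Suc p)" by (metis One_nat_def Suc_le_mono le0 not0_implies_Suc)
  then show ?thesis
  proof cases
    case 1
    then have "unit_in LR (kk n)" "unit_in LR (ll n)" using unit_in_initial_values by (auto simp: le_Suc_eq)
    moreover have "quad_form a3 a5 a6 (kk (Suc n)) (ll (Suc n)) \<in> LR"
      "quad_form a1 a2 a3 (kk (Suc n)) (ll (Suc n)) \<in> LR"
      using admissible_atD(1,2)[OF adm[of "Suc n"]] by (simp_all add: quad_form_in_LR)
    ultimately show ?thesis by (simp add: unit_in_dvd_in)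
  next
    case (2 p)
    note n = this
    have g: "admissible_at p" "admissible_at (Suc p)" "admissible_at (Suc (Suc p))" "admissible_at (Suc (Suc (Suc p)))"
      using adm n by simp_all
    note g0 = admissible_atD[OF g(1)] and g1 = admissible_atD[OF g(2)] and g2 = admissible_atD[OF g(3)]
      and g3 = admissible_atD[OF g(4)]
    note r0 = recurrence_in_LR[OF g(1-3)] and r1 = recurrence_in_LR[OF g(2-4)]
    have c: "coprime_in LR (kk (Suc (Suc p))) (kk (Suc p))" "coprime_in LR (kk (Suc (Suc p))) (ll (Suc p))"
      "coprime_in LR (ll (Suc (Suc p))) (kk (Suc p))" "coprime_in LR (ll (Suc (Suc p))) (ll (Suc p))"
      using cop[of "Suc p"] n coprime_in_commute unfolding coprime_at_def by simp_all
    have "dvd_in LR (kk n) (quad_form a3 a5 a6 (kk (Suc n)) (ll (Suc n)))"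
      using dvd_in_quad_form_next[OF g2(1,2) g1(1,2) g3(1,2) g0(1) coeffs_in_LR(3,4,5,1,2) r1 r0(1) c(1,2)] n
      by simp
    moreover have "dvd_in LR (ll n) (quad_form a1 a2 a3 (kk (Suc n)) (ll (Suc n)))"
      using dvd_in_quad_form_next[OF g2(2,1) g1(2,1) g3(2,1) g0(2) coeffs_in_LR(3,2,1,5,4)
          r1(2)[unfolded quad_form_swap[of a1]] r1(1)[unfolded quad_form_swap[of a3]]
          r0(2)[unfolded quad_form_swap[of a1]] c(4,3)] n
      by (simp add: quad_form_swap[of a1])
    ultimately show ?thesis ..
  qed
qed

lemma admissible_at_next:
  assumes g: "admissible_at n" "admissible_at (Suc n)"
    and dv: "dvd_in LR (kk n) (quad_form a3 a5 a6 (kk (Suc n)) (ll (Suc n)))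
      \<and> dvd_in LR (ll n) (quad_form a1 a2 a3 (kk (Suc n)) (ll (Suc n)))"
  shows "admissible_at (Suc (Suc n))"
proof -
  note g0 = admissible_atD[OF g(1)] and g1 = admissible_atD[OF g(2)]
  obtain q q' where q: "q \<in> LR" "quad_form a3 a5 a6 (kk (Suc n)) (ll (Suc n)) = kk n * q"
    and q': "q' \<in> LR" "quad_form a1 a2 a3 (kk (Suc n)) (ll (Suc n)) = ll n * q'"
    using dv by (auto simp: dvd_in_def)
  have "quad_form (emb a3) (emb a5) (emb a6) (kseq (Suc n)) (lseq (Suc n)) = kseq n * emb q"
    "quad_form (emb a1) (emb a2) (emb a3) (kseq (Suc n)) (lseq (Suc n)) = lseq n * emb q'"
    using arg_cong[OF q(2), of "\<lambda>x. emb x"] arg_cong[OF q'(2), of "\<lambda>x. emb x"]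
    by (simp_all only: emb_mult emb_quad_form g0(3,4) g1(3,4))
  moreover have "kseq n \<noteq> 0" "lseq n \<noteq> 0" using g0(3,4,7,8) emb_eq_0_iff by metis+
  ultimately have "kseq (Suc (Suc n)) = emb q" "lseq (Suc (Suc n)) = emb q'"
    by (simp_all add: kseq_lseq_Suc_Suc)
  then have kq: "kk (Suc (Suc n)) = q" and lq: "ll (Suc (Suc n)) = q'"
    and im: "kseq (Suc (Suc n)) \<in> emb ` LR" "lseq (Suc (Suc n)) \<in> emb ` LR"
    using q(1) q'(1) by (simp_all add: to_LR_emb)
  have "q * kk n = quad_form (of_apoly A3) (of_apoly A5) (of_apoly A6) (kk (Suc n)) (ll (Suc n))"
    "q' * ll n = quad_form (of_apoly A1) (of_apoly A2) (of_apoly A3) (kk (Suc n)) (ll (Suc n))"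
    using q(2) q'(2) by (simp_all add: of_apoly_vars mult.commute)
  note sA = admissible_quotient[OF g1(5,6) g0(5) g1(9) q(1) this(1) A_nonzero(3,4,5)]
    and sB = admissible_quotient[OF g1(5,6) g0(6) g1(9) q'(1) this(2) A_nonzero(1,2,3)]
  have "A1 dvd A136" "A3 dvd A136" "A6 dvd A136" by (simp_all add: A136_def)
  note sA = sA[OF this(2,3) quad_forms_pos(1)] and sB = sB[OF this(1,2) quad_forms_pos(2)]
  have "lead_exps_LR q \<noteq> lead_exps_LR q'" using sA(2) sB(2) g0(9) by (metis add_left_cancel add.commute)
  then show ?thesis using im sA(1) sB(1) by (simp add: admissible_at_def kq lq)
qed

lemma coprime_at_next:
  assumes g: "admissible_at n" "admissible_at (Suc n)" "admissible_at (Suc (Suc n))" and cop: "coprime_at n"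
  shows "coprime_at (Suc n)"
proof -
  note g0 = admissible_atD[OF g(1)] and g1 = admissible_atD[OF g(2)] and g2 = admissible_atD[OF g(3)]
  note r = recurrence_in_LR[OF g]
  note coeffs = admissible_coprime_in_coeffs[OF g1(5)] admissible_coprime_in_coeffs[OF g1(6)]
  have kl: "coprime_in LR (kk (Suc n)) (ll (Suc n))" using cop by (simp add: coprime_at_def)
  have c1: "coprime_in LR (kk (Suc n)) (kk (Suc (Suc n)))"
    using coprime_in_quotient[OF g1(1,2) g0(1) coeffs_in_LR(3,4,5) r(1) kl coeffs(3)] .
  have c2: "coprime_in LR (kk (Suc n)) (ll (Suc (Suc n)))"
    using coprime_in_quotient[OF g1(1,2) g0(2) coeffs_in_LR(1,2,3) r(2) kl coeffs(2)] .
  have c3: "coprime_in LR (ll (Suc n)) (kk (Suc (Suc n)))"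
    using coprime_in_quotient[OF g1(2,1) g0(1) coeffs_in_LR(5,4,3) r(1)[unfolded quad_form_swap[of a3]]
        coprime_in_commute[OF kl] coeffs(5)] .
  have c4: "coprime_in LR (ll (Suc n)) (ll (Suc (Suc n)))"
    using coprime_in_quotient[OF g1(2,1) g0(2) coeffs_in_LR(3,2,1) r(2)[unfolded quad_form_swap[of a1]]
        coprime_in_commute[OF kl] coeffs(4)] .
  obtain N where "lead_acoeff_LR (kk (Suc (Suc n))) dvd A136 ^ N" using g2(5) by (auto simp: admissible_def)
  from coprime_in_Res[OF g2(1,7) this]
  have "coprime_in LR (kk (Suc (Suc n))) (ll (Suc (Suc n)))"
    using coprime_in_quotients[OF g1(1,2) g0(1,2) g2(1,2) r c1 c3]
    by blast
  then show ?thesis using kl c1 c2 c3 c4 by (simp add: coprime_at_def)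
qed

lemma invariant_upto: "(\<forall>j \<le> Suc n. admissible_at j) \<and> (\<forall>j \<le> n. coprime_at j)"
proof (induction n)
  case 0
  then show ?case using invariant_initial by (auto simp: le_Suc_eq)
next
  case (Suc n)
  then have adm: "\<And>j. j \<le> Suc n \<Longrightarrow> admissible_at j" and cop: "\<And>j. j \<le> n \<Longrightarrow> coprime_at j" by auto
  have next_adm: "admissible_at (Suc (Suc n))"
    using admissible_at_next[OF adm adm laurent_step[OF adm cop]] by simp
  moreover have "coprime_at (Suc n)" using coprime_at_next[OF adm adm next_adm cop] by simp
  ultimately show ?case using adm cop by (auto simp: le_Suc_eq)
qed

theorem proposition1:
  shows "(\<forall>n. kseq n \<in> emb ` LR \<and> lseq n \<in> emb ` LR) \<and>
    (\<forall>n p q r s. p \<in> LR \<and> q \<in> LR \<and> r \<in> LR \<and> s \<in> LR \<and>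
        emb p = kseq n \<and> emb q = lseq n \<and> emb r = kseq (Suc n) \<and> emb s = lseq (Suc n) \<longrightarrow>
        coprime_in LR p q \<and> coprime_in LR p r \<and> coprime_in LR p s \<and>
        coprime_in LR q r \<and> coprime_in LR q s \<and> coprime_in LR r s)"
proof -
  have adm: "admissible_at n" and cop: "coprime_at n" for n
    using invariant_upto[of n] by auto
  show ?thesis
  proof (intro conjI allI impI)
    fix n
    show "kseq n \<in> emb ` LR" "lseq n \<in> emb ` LR" using adm[of n] by (simp_all add: admissible_at_def)
  next
    fix n p q r s
    assume "p \<in> LR \<and> q \<in> LR \<and> r \<in> LR \<and> s \<in> LR \<and>
      emb p = kseq n \<and> emb q = lseq n \<and> emb r = kseq (Suc n) \<and> emb s = lseq (Suc n)"
    then have "kk n = p" "ll n = q" "kk (Suc n) = r" "ll (Suc n) = s" using to_LR_emb by metis+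
    then show "coprime_in LR p q" "coprime_in LR p r" "coprime_in LR p s"
      "coprime_in LR q r" "coprime_in LR q s" "coprime_in LR r s"
      using cop[of n] by (simp_all add: coprime_at_def)
  qed
qed

end
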